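(* Let $\mathcal H$ be a complex Hilbert space, $T\in\mathcal B(\mathcal H)$ with polar decomposition $T=U|T|$. Then for all $t\in[0,1]$ and all $x,y\in\mathcal H$ with $Tx\neq0$, $$|\langle Tx,y\rangle|\le\frac{\|T\|^{1/2}}{2}\left(2\sqrt{\langle|T|^tx,x\rangle\langle|T^*|^{1-t}y,y\rangle}-\frac{\inf_{\lambda\in\mathbb C}\big\||T|^{t/2}x-\lambda|T|^{(1-t)/2}U^*y\big\|^2}{2\||T|^{t/2}x\|}\,\big\||T^*|^{(1-t)/2}y\big\|\right).$$
   Context: $|T|=(T^*T)^{1/2}$, $|T^*|=(TT^* )^{1/2}$, powers via functional calculus with $|T|^0=I$; $T=U|T|$ is the polar decomposition with $U$ a partial isometry; $\|\cdot\|$ is the operator norm. *)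

theory Defs
  imports "HOL-Analysis.Analysis" "HOL-Computational_Algebra.Polynomial"
begin

class complex_vector = real_vector +
  fixes scaleC :: "complex \<Rightarrow> 'a \<Rightarrow> 'a"
  assumes scaleC_add_right: "scaleC a (x + y) = scaleC a x + scaleC a y"
    and scaleC_add_left: "scaleC (a + b) x = scaleC a x + scaleC b x"
    and scaleC_scaleC: "scaleC a (scaleC b x) = scaleC (a * b) x"
    and scaleC_one: "scaleC 1 x = x"
    and scaleR_scaleC: "scaleR r x = scaleC (complex_of_real r) x"

class complex_inner = complex_vector + real_normed_vector +
  fixes cinner :: "'a \<Rightarrow> 'a \<Rightarrow> complex"
  assumes cinner_commute: "cinner x y = cnj (cinner y x)"
    and cinner_add_left: "cinner (x + y) z = cinner x z + cinner y z"
    and cinner_scaleC_left: "cinner (scaleC a x) y = a * cinner x y"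
    and cinner_real_nonneg: "Im (cinner x x) = 0 \<and> 0 \<le> Re (cinner x x)"
    and cinner_eq_zero_iff: "cinner x x = 0 \<longleftrightarrow> x = 0"
    and norm_eq_sqrt_cinner: "norm x = sqrt (Re (cinner x x))"

class chilbert_space = complex_inner + banach

definition bounded_clinear :: "('a::complex_inner \<Rightarrow> 'b::complex_inner) \<Rightarrow> bool" where
  "bounded_clinear T \<longleftrightarrow>
     (\<forall>x y. T (x + y) = T x + T y) \<and> (\<forall>a x. T (scaleC a x) = scaleC a (T x)) \<and>
     (\<exists>K. \<forall>x. norm (T x) \<le> norm x * K)"

definition adj :: "('a::complex_inner \<Rightarrow> 'b::complex_inner) \<Rightarrow> 'b \<Rightarrow> 'a" where
  "adj T = (SOME S. \<forall>x y. cinner (T x) y = cinner x (S y))"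

text \<open>Function f_t(s) = s^t with the convention s^0 = 1 (so that A^0 = I).\<close>
definition fc_fun :: "real \<Rightarrow> real \<Rightarrow> real" where
  "fc_fun t s = (if t = 0 then 1 else s powr t)"

definition poly_op :: "real poly \<Rightarrow> ('a::complex_inner \<Rightarrow> 'a) \<Rightarrow> 'a \<Rightarrow> 'a" where
  "poly_op p A x = (\<Sum>i\<le>degree p. coeff p i *\<^sub>R (A ^^ i) x)"

text \<open>For a positive operator A (spectrum in [0, norm A]), A^t is the strong limit of
  p_n(A) for any sequence of real polynomials p_n converging uniformly to s^t on [0, norm A].\<close>
definition opow :: "('a::complex_inner \<Rightarrow> 'a) \<Rightarrow> real \<Rightarrow> 'a \<Rightarrow> 'a" where
  "opow A t = (THE B. \<forall>P. uniform_limit {0..onorm A} (\<lambda>n. poly (P n)) (fc_fun t) sequentially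
                  \<longrightarrow> (\<forall>x. (\<lambda>n. poly_op (P n) A x) \<longlonglongrightarrow> B x))"

definition absop :: "('a::complex_inner \<Rightarrow> 'a) \<Rightarrow> 'a \<Rightarrow> 'a" where
  "absop T = opow (adj T \<circ> T) (1/2)"

definition partial_isometry :: "('a::complex_inner \<Rightarrow> 'a) \<Rightarrow> bool" where
  "partial_isometry U \<longleftrightarrow> bounded_clinear U \<and>
     (\<forall>x. (\<forall>z. U z = 0 \<longrightarrow> cinner z x = 0) \<longrightarrow> norm (U x) = norm x)"

definition polar_decomposition :: "('a::complex_inner \<Rightarrow> 'a) \<Rightarrow> ('a \<Rightarrow> 'a) \<Rightarrow> bool" where
  "polar_decomposition T U \<longleftrightarrow> partial_isometry U \<and> (\<forall>z. T z = U (absop T z)) \<and>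
     (\<forall>z. U z = 0 \<longleftrightarrow> T z = 0)"

end

theory Submission
  imports Defs
begin

text \<open>
  Put \<open>P = |T|\<close>, \<open>a = P\<^bsup>t/2\<^esup> x\<close> and \<open>b = P\<^bsup>(1-t)/2\<^esup> U\<^sup>* y\<close>. Since \<open>T = U P\<close>, we have
  \<open>\<langle>T x, y\<rangle> = \<langle>P\<^bsup>1/2\<^esup> a, b\<rangle>\<close>, and as \<open>0 \<le> P\<^bsup>1/2\<^esup> \<le> M = \<parallel>T\<parallel>\<^bsup>1/2\<^esup>\<close> the operator
  \<open>P\<^bsup>1/2\<^esup> - M/2\<close> has norm at most \<open>M/2\<close>, giving the Buzano-type bound
  \<open>|\<langle>T x, y\<rangle>| \<le> M/2 (\<parallel>a\<parallel> \<parallel>b\<parallel> + |\<langle>a, b\<rangle>|)\<close>. The quadratic forms in the statement are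
  \<open>\<parallel>a\<parallel>\<^sup>2\<close> and \<open>\<parallel>|T\<^sup>*|\<^bsup>(1-t)/2\<^esup> y\<parallel>\<^sup>2 \<ge> \<parallel>b\<parallel>\<^sup>2\<close> (because \<open>|T\<^sup>*|\<^sup>s = U |T|\<^sup>s U\<^sup>*\<close>), and
  the infimum is at most \<open>\<parallel>a\<parallel>\<^sup>2 - |\<langle>a, b\<rangle>|\<^sup>2 / \<parallel>b\<parallel>\<^sup>2\<close>; AM-GM then finishes.

  For a positive operator \<open>A\<close>,
  every Bernstein basis polynomial of \<open>[0, \<parallel>A\<parallel>]\<close> evaluated at \<open>A\<close> is positive, being a
  square times \<open>1\<close>, \<open>A\<close>, \<open>\<parallel>A\<parallel> - A\<close> or their product; since the Bernstein coefficients of a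
  polynomial \<open>p\<close> converge to its values, \<open>\<parallel>p(A)\<parallel> \<le> sup\<^bsub>[0, \<parallel>A\<parallel>]\<^esub> |p|\<close>. Hence
  uniform polynomial approximations of \<open>s\<^sup>r\<close> converge strongly, which defines \<open>A\<^sup>r\<close>.
\<close>

lemma scaleC_zero_right [simp]: "scaleC a (0::'a::complex_vector) = 0"
  by (metis add_cancel_right_right scaleC_add_right)

lemma scaleC_scaleR_commute: "scaleC a (scaleR r (x::'a::complex_vector)) = scaleR r (scaleC a x)"
  by (simp add: scaleR_scaleC scaleC_scaleC mult.commute)

lemma cinner_zero_left [simp]: "cinner 0 (y::'a::complex_inner) = 0"
  by (metis add_cancel_right_right add_0 cinner_add_left)

lemma cinner_minus_left: "cinner (- x) (y::'a::complex_inner) = - cinner x y"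
  by (metis add.right_inverse cinner_add_left cinner_zero_left eq_neg_iff_add_eq_0)

lemma cinner_diff_left: "cinner (x - z) (y::'a::complex_inner) = cinner x y - cinner z y"
  by (metis cinner_add_left cinner_minus_left diff_conv_add_uminus)

lemma cinner_add_right: "cinner x (y + z::'a::complex_inner) = cinner x y + cinner x z"
  by (metis cinner_add_left cinner_commute complex_cnj_add)

lemma cinner_zero_right [simp]: "cinner x (0::'a::complex_inner) = 0"
  by (metis cinner_commute cinner_zero_left complex_cnj_zero)

lemma cinner_diff_right: "cinner x (y - z::'a::complex_inner) = cinner x y - cinner x z"
  by (metis cinner_add_right cinner_commute cinner_diff_left complex_cnj_diff)

lemma cinner_scaleC_right: "cinner x (scaleC a y::'a::complex_inner) = cnj a * cinner x y"
  by (metis cinner_commute cinner_scaleC_left complex_cnj_cnj complex_cnj_mult)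

lemma cinner_scaleR_left: "cinner (scaleR r x) (y::'a::complex_inner) = of_real r * cinner x y"
  by (simp add: scaleR_scaleC cinner_scaleC_left)

lemma cinner_scaleR_right: "cinner x (scaleR r y::'a::complex_inner) = of_real r * cinner x y"
  by (simp add: scaleR_scaleC cinner_scaleC_right)

lemma cinner_sum_left: "cinner (\<Sum>i\<in>I. f i) (y::'a::complex_inner) = (\<Sum>i\<in>I. cinner (f i) y)"
  by (induct I rule: infinite_finite_induct) (auto simp: cinner_add_left)

lemma cinner_self: "cinner x (x::'a::complex_inner) = of_real ((norm x)\<^sup>2)"
proof -
  have "Im (cinner x x) = 0" "0 \<le> Re (cinner x x)" using cinner_real_nonneg by auto
  moreover have "(norm x)\<^sup>2 = Re (cinner x x)" using norm_eq_sqrt_cinner[of x] \<open>0 \<le> Re _\<close> by simp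
  ultimately show ?thesis by (simp add: complex_eq_iff)
qed

lemma Re_cinner_self: "Re (cinner x (x::'a::complex_inner)) = (norm x)\<^sup>2"
  by (simp add: cinner_self)

lemma cinner_ext: "(\<And>x. cinner x z = cinner x w) \<Longrightarrow> z = (w::'a::complex_inner)"
  by (metis cinner_diff_right cinner_eq_zero_iff diff_self eq_iff_diff_eq_0)

lemma power2_norm_diff:
  "(norm (a - b))\<^sup>2 = (norm a)\<^sup>2 - 2 * Re (cinner a b) + (norm (b::'a::complex_inner))\<^sup>2"
proof -
  have "(norm (a - b))\<^sup>2 = Re (cinner a a) - Re (cinner a b) - Re (cinner b a) + Re (cinner b b)"
    by (simp add: Re_cinner_self [symmetric] cinner_diff_left cinner_diff_right)
  moreover have "Re (cinner b a) = Re (cinner a b)" by (subst cinner_commute) simp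
  ultimately show ?thesis by (simp add: Re_cinner_self)
qed

lemma power2_norm_diff_scaleC:
  "(norm (x - scaleC l (k::'a::complex_inner)))\<^sup>2 =
     (norm x)\<^sup>2 - 2 * Re (cnj l * cinner x k) + (cmod l)\<^sup>2 * (norm k)\<^sup>2"
proof -
  have "(norm (scaleC l k))\<^sup>2 = Re ((l * cnj l) * cinner k k)"
    by (simp only: Re_cinner_self [symmetric] cinner_scaleC_left cinner_scaleC_right mult.assoc mult.left_commute)
  also have "\<dots> = (cmod l)\<^sup>2 * (norm k)\<^sup>2"
    unfolding complex_norm_square [symmetric] cinner_self
    by (simp only: of_real_mult [symmetric] Re_complex_of_real)
  finally show ?thesis by (simp add: power2_norm_diff cinner_scaleC_right)
qed

text \<open>Subtracting the projection onto \<open>k\<close>; for \<open>k = 0\<close> both sides degenerate to \<open>\<parallel>x\<parallel>\<^sup>2\<close>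
  because \<open>0 / 0 = 0\<close>.\<close>
lemma power2_norm_diff_projection:
  "(norm (x - scaleC (cinner x k / of_real ((norm k)\<^sup>2)) (k::'a::complex_inner)))\<^sup>2 =
     (norm x)\<^sup>2 - (cmod (cinner x k))\<^sup>2 / (norm k)\<^sup>2"
proof (cases "k = 0")
  case False
  define c where "c = cinner x k"
  have "cnj (c / of_real ((norm k)\<^sup>2)) * c = (c * cnj c) / of_real ((norm k)\<^sup>2)"
    by (simp add: mult.commute)
  also have "c * cnj c = of_real ((cmod c)\<^sup>2)" by (rule complex_norm_square [symmetric])
  finally have "cnj (c / of_real ((norm k)\<^sup>2)) * c = of_real ((cmod c)\<^sup>2 / (norm k)\<^sup>2)"
    by simp
  moreover have "cmod (c / of_real ((norm k)\<^sup>2)) = cmod c / (norm k)\<^sup>2"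
    by (simp add: norm_divide norm_power)
  ultimately show ?thesis using False
    by (simp add: power2_norm_diff_scaleC c_def [symmetric] power_divide)
       (simp add: field_simps power2_eq_square power4_eq_xxxx)
qed simp

lemma complex_Cauchy_Schwarz: "cmod (cinner x y) \<le> norm x * norm (y::'a::complex_inner)"
proof (cases "y = 0")
  case False
  have "(cmod (cinner x y))\<^sup>2 / (norm y)\<^sup>2 \<le> (norm x)\<^sup>2"
    by (metis diff_ge_0_iff_ge power2_norm_diff_projection zero_le_power2)
  then have "(cmod (cinner x y))\<^sup>2 \<le> (norm x * norm y)\<^sup>2"
    using False by (simp add: field_simps power_mult_distrib)
  then show ?thesis by (rule power2_le_imp_le) simp
qed simp

lemma Re_cinner_le: "Re (cinner x y) \<le> norm x * norm (y::'a::complex_inner)"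
  using complex_Cauchy_Schwarz complex_Re_le_cmod order_trans by blast

lemma bounded_bilinear_cinner: "bounded_bilinear (cinner :: 'a::complex_inner \<Rightarrow> 'a \<Rightarrow> complex)"
proof
  show "\<exists>K. \<forall>a b::'a. norm (cinner a b) \<le> norm a * norm b * K"
    by (rule exI[of _ 1]) (simp add: complex_Cauchy_Schwarz)
qed (auto simp: cinner_add_left cinner_add_right cinner_scaleR_left cinner_scaleR_right
                scaleR_conv_of_real)

lemmas tendsto_cinner = bounded_bilinear.tendsto[OF bounded_bilinear_cinner]

lemma norm_scaleC: "norm (scaleC a (x::'a::complex_inner)) = cmod a * norm x"
  using power2_norm_diff_scaleC[of 0 a x]
  by (simp add: power_mult_distrib [symmetric] power2_eq_iff_nonneg)

lemma bounded_linear_scaleC: "bounded_linear (scaleC a :: 'a::complex_inner \<Rightarrow> 'a)"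
  by (rule bounded_linear_intro[of _ "cmod a"])
     (auto simp: scaleC_add_right scaleC_scaleR_commute norm_scaleC mult.commute)

lemma parallelogram_law:
  "(norm (u + v))\<^sup>2 + (norm (u - v))\<^sup>2 = 2 * (norm u)\<^sup>2 + 2 * (norm (v::'a::complex_inner))\<^sup>2"
proof -
  have "(norm (u + v))\<^sup>2 + (norm (u - v))\<^sup>2 = Re (cinner (u+v) (u+v)) + Re (cinner (u-v) (u-v))"
    by (simp add: Re_cinner_self)
  also have "\<dots> = 2 * Re (cinner u u) + 2 * Re (cinner v v)"
    by (simp add: cinner_add_left cinner_add_right cinner_diff_left cinner_diff_right)
  finally show ?thesis by (simp add: Re_cinner_self)
qed

section \<open>The Riesz representation theorem and adjoints\<close>

lemma Cauchy_minimizing_sequence: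
  fixes xs :: "nat \<Rightarrow> 'a::complex_inner"
  assumes midpoint: "\<And>m n. D \<le> (norm (scaleR (1/2) (xs m + xs n)))\<^sup>2"
    and xs_lt: "\<And>n. (norm (xs n))\<^sup>2 < D + inverse (real (Suc n))"
  shows "Cauchy xs"
proof (rule metric_CauchyI)
  have dist_xs: "(norm (xs m - xs n))\<^sup>2 \<le> 2 * inverse (real (Suc m)) + 2 * inverse (real (Suc n))"
    for m n
  proof -
    have "4 * D \<le> (norm (xs m + xs n))\<^sup>2" using midpoint[of m n] by (simp add: power2_eq_square)
    then show ?thesis using parallelogram_law[of "xs m" "xs n"] xs_lt[of m] xs_lt[of n] by linarith
  qed
  fix e :: real assume "0 < e"
  obtain N :: nat where N: "4 / e\<^sup>2 < real (Suc N)"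
    using reals_Archimedean2 less_Suc_eq of_nat_Suc by (metis add.commute less_add_one order.strict_trans)
  have "dist (xs m) (xs n) < e" if "N \<le> m" "N \<le> n" for m n
  proof -
    have "inverse (real (Suc m)) \<le> inverse (real (Suc N))" "inverse (real (Suc n)) \<le> inverse (real (Suc N))"
      using that by (simp_all add: le_imp_inverse_le)
    moreover have "4 * inverse (real (Suc N)) < e\<^sup>2"
      using N \<open>0 < e\<close> by (simp add: field_simps)
    ultimately have "(norm (xs m - xs n))\<^sup>2 < e\<^sup>2" using dist_xs[of m n] by linarith
    then show ?thesis using \<open>0 < e\<close> by (simp add: dist_norm power_less_imp_less_base)
  qed
  then show "\<exists>N. \<forall>m\<ge>N. \<forall>n\<ge>N. dist (xs m) (xs n) < e" by blast
qed

lemma exists_minimal_norm: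
  fixes S :: "'a::chilbert_space set"
  assumes "S \<noteq> {}" "closed S"
    and midpoint: "\<And>u v. u \<in> S \<Longrightarrow> v \<in> S \<Longrightarrow> scaleR (1/2) (u + v) \<in> S"
  shows "\<exists>x0\<in>S. \<forall>w\<in>S. norm x0 \<le> norm w"
proof -
  define D where "D = Inf ((\<lambda>w. (norm w)\<^sup>2) ` S)"
  have D_le: "D \<le> (norm w)\<^sup>2" if "w \<in> S" for w
    unfolding D_def using that by (intro cInf_lower bdd_belowI[of _ 0]) auto
  have "\<exists>w\<in>S. (norm w)\<^sup>2 < D + inverse (real (Suc n))" for n
    using cInf_lessD[of "(\<lambda>w. (norm w)\<^sup>2) ` S"] \<open>S \<noteq> {}\<close> unfolding D_def by simp
  then obtain xs where xs_S: "\<And>n. xs n \<in> S"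
    and xs_lt: "\<And>n. (norm (xs n))\<^sup>2 < D + inverse (real (Suc n))"
    by metis
  have "Cauchy xs"
    using D_le midpoint xs_S xs_lt by (intro Cauchy_minimizing_sequence[of D]) blast+
  then obtain x0 where lim: "xs \<longlonglongrightarrow> x0" using Cauchy_convergent_iff convergent_def by blast
  have "x0 \<in> S" using \<open>closed S\<close> xs_S lim closed_sequentially by blast
  have "(\<lambda>n. (norm (xs n))\<^sup>2 - inverse (real (Suc n))) \<longlonglongrightarrow> (norm x0)\<^sup>2"
    using tendsto_diff[OF tendsto_power[OF tendsto_norm[OF lim]] LIMSEQ_inverse_real_of_nat] by simp
  moreover have "(norm (xs n))\<^sup>2 - inverse (real (Suc n)) \<le> D" for n
    using xs_lt[of n] by linarith
  ultimately have "(norm x0)\<^sup>2 \<le> D" by (intro LIMSEQ_le_const2) auto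
  then have "norm x0 \<le> norm w" if "w \<in> S" for w
    using D_le[OF that] by (simp add: power2_le_imp_le)
  then show ?thesis using \<open>x0 \<in> S\<close> by blast
qed

lemma minimal_norm_orthogonal_ker:
  fixes f :: "'a::complex_inner \<Rightarrow> complex"
  assumes add: "\<And>x y. f (x + y) = f x + f y" and scaleC: "\<And>a x. f (scaleC a x) = a * f x"
    and "f x0 = 1" "f k = 0" and x0_min: "\<And>w. f w = 1 \<Longrightarrow> norm x0 \<le> norm w"
  shows "cinner x0 k = 0"
proof (cases "k = 0")
  case False
  define l where "l = cinner x0 k / of_real ((norm k)\<^sup>2)"
  have "f (x0 - scaleC l k) = 1"
    using add[of "x0 - scaleC l k" "scaleC l k"] assms(3,4) by (simp add: scaleC)
  then have "(norm x0)\<^sup>2 \<le> (norm (x0 - scaleC l k))\<^sup>2"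
    using x0_min by (simp add: power_mono)
  then have "(norm x0)\<^sup>2 \<le> (norm x0)\<^sup>2 - (cmod (cinner x0 k))\<^sup>2 / (norm k)\<^sup>2"
    by (simp only: l_def power2_norm_diff_projection)
  then have "(cmod (cinner x0 k))\<^sup>2 / (norm k)\<^sup>2 \<le> 0" by linarith
  then show ?thesis using False by (simp add: divide_le_0_iff)
qed simp

lemma Riesz_representation:
  fixes f :: "'a::chilbert_space \<Rightarrow> complex"
  assumes add: "\<And>x y. f (x + y) = f x + f y" and scaleC: "\<And>a x. f (scaleC a x) = a * f x"
    and bounded: "\<And>x. cmod (f x) \<le> norm x * K"
  shows "\<exists>z. \<forall>x. f x = cinner x z"
proof (cases "\<forall>x. f x = 0")
  case True
  then show ?thesis by (intro exI[of _ 0]) simp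
next
  case False
  then obtain x1 where "f x1 \<noteq> 0" by auto
  have lin: "bounded_linear f"
    by (rule bounded_linear_intro[of _ K]) (auto simp: add scaleC scaleR_scaleC bounded scaleR_conv_of_real)
  define S where "S = f -` {1}"
  have "scaleC (1 / f x1) x1 \<in> S" using \<open>f x1 \<noteq> 0\<close> by (simp add: S_def scaleC)
  moreover have "closed S"
    unfolding S_def by (intro closed_vimage linear_continuous_on lin) simp
  moreover have "scaleR (1/2) (u + v) \<in> S" if "u \<in> S" "v \<in> S" for u v
    using that by (simp add: S_def add scaleR_scaleC scaleC)
  ultimately obtain x0 where "x0 \<in> S" and x0_min: "\<And>w. w \<in> S \<Longrightarrow> norm x0 \<le> norm w"
    using exists_minimal_norm[of S] by blast
  then have "f x0 = 1" by (simp add: S_def)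
  have orth: "cinner x0 k = 0" if "f k = 0" for k
    by (rule minimal_norm_orthogonal_ker[OF add scaleC \<open>f x0 = 1\<close> that])
       (use x0_min in \<open>simp add: S_def\<close>)
  have "x0 \<noteq> 0" using \<open>f x0 = 1\<close> linear_0[OF bounded_linear.linear[OF lin]] by auto
  have "f x = cinner x (scaleC (of_real (1 / (norm x0)\<^sup>2)) x0)" for x
  proof -
    have "f (x - scaleC (f x) x0) = 0"
      using add[of "x - scaleC (f x) x0" "scaleC (f x) x0"] by (simp add: scaleC \<open>f x0 = 1\<close>)
    then have "cinner x0 (x - scaleC (f x) x0) = 0" by (rule orth)
    then have "cnj (cinner x x0) = cnj (f x * of_real ((norm x0)\<^sup>2))"
      by (simp add: cinner_diff_right cinner_scaleC_right cinner_self flip: cinner_commute)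
    then have "cinner x x0 = f x * of_real ((norm x0)\<^sup>2)" by (simp only: complex_cnj_cancel_iff)
    then show ?thesis using \<open>x0 \<noteq> 0\<close> by (simp add: cinner_scaleC_right field_simps)
  qed
  then show ?thesis by blast
qed

lemma clinear_add: "bounded_clinear T \<Longrightarrow> T (x + y) = T x + T y"
  by (simp add: bounded_clinear_def)

lemma clinear_scaleC: "bounded_clinear T \<Longrightarrow> T (scaleC a x) = scaleC a (T x)"
  by (simp add: bounded_clinear_def)

lemma bounded_clinear_imp_bounded_linear: "bounded_clinear T \<Longrightarrow> bounded_linear T"
  unfolding bounded_clinear_def by (auto intro!: bounded_linear_intro simp: scaleR_scaleC)

lemma clinear_zero: "bounded_clinear T \<Longrightarrow> T 0 = 0"
  using linear_0[OF bounded_linear.linear[OF bounded_clinear_imp_bounded_linear]] by blast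

lemma clinear_diff: "bounded_clinear T \<Longrightarrow> T (x - y) = T x - T y"
  using linear_diff[OF bounded_linear.linear[OF bounded_clinear_imp_bounded_linear]] by blast

lemma clinear_scaleR: "bounded_clinear T \<Longrightarrow> T (scaleR r x) = scaleR r (T x)"
  using linear_scale[OF bounded_linear.linear[OF bounded_clinear_imp_bounded_linear]] by blast

lemma bounded_clinear_norm_le: "bounded_clinear T \<Longrightarrow> norm (T x) \<le> onorm T * norm x"
  using onorm[OF bounded_clinear_imp_bounded_linear] by blast

lemma bounded_clinear_onorm_nonneg: "bounded_clinear T \<Longrightarrow> 0 \<le> onorm T"
  using onorm_pos_le[OF bounded_clinear_imp_bounded_linear] by blast

lemma bounded_clinear_tendsto:
  "bounded_clinear T \<Longrightarrow> (f \<longlongrightarrow> l) F \<Longrightarrow> ((\<lambda>n. T (f n)) \<longlongrightarrow> T l) F"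
  using bounded_linear.tendsto[OF bounded_clinear_imp_bounded_linear] by blast

lemma bounded_clinearI:
  assumes "\<And>x y. T (x + y) = T x + T y" "\<And>a x. T (scaleC a x) = scaleC a (T x)"
    and "\<And>x. norm (T x) \<le> norm x * K"
  shows "bounded_clinear T"
  using assms unfolding bounded_clinear_def by blast

lemma bounded_clinear_comp:
  assumes S: "bounded_clinear S" and T: "bounded_clinear T"
  shows "bounded_clinear (S \<circ> T)"
proof (rule bounded_clinearI[where K = "onorm S * onorm T"])
  fix x
  have "norm (S (T x)) \<le> onorm S * (onorm T * norm x)"
    using bounded_clinear_norm_le[OF S] bounded_clinear_norm_le[OF T]
      bounded_clinear_onorm_nonneg[OF S] by (meson mult_left_mono order_trans)
  then show "norm ((S \<circ> T) x) \<le> norm x * (onorm S * onorm T)" by (simp add: ac_simps)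
qed (simp_all add: clinear_add[OF S] clinear_add[OF T] clinear_scaleC[OF S] clinear_scaleC[OF T])

lemma adj_exists:
  fixes T :: "'a::chilbert_space \<Rightarrow> 'b::chilbert_space"
  assumes T: "bounded_clinear T"
  shows "\<exists>S. \<forall>x y. cinner (T x) y = cinner x (S y)"
proof -
  have "\<exists>z. \<forall>x. cinner (T x) y = cinner x z" for y
  proof (rule Riesz_representation[where K = "onorm T * norm y"])
    fix x
    have "cmod (cinner (T x) y) \<le> norm (T x) * norm y" by (rule complex_Cauchy_Schwarz)
    also have "\<dots> \<le> onorm T * norm x * norm y"
      by (rule mult_right_mono[OF bounded_clinear_norm_le[OF T]]) simp
    finally show "cmod (cinner (T x) y) \<le> norm x * (onorm T * norm y)" by (simp add: ac_simps)
  qed (simp_all add: clinear_add[OF T] clinear_scaleC[OF T] cinner_add_left cinner_scaleC_left)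
  then show ?thesis by metis
qed

lemma cinner_adj_right:
  fixes T :: "'a::chilbert_space \<Rightarrow> 'b::chilbert_space"
  assumes "bounded_clinear T"
  shows "cinner (T x) y = cinner x (adj T y)"
  using someI_ex[OF adj_exists[OF assms]] unfolding adj_def by blast

lemma adj_eqI:
  fixes T :: "'a::complex_inner \<Rightarrow> 'b::complex_inner"
  assumes "\<And>x y. cinner (T x) y = cinner x (S y)"
  shows "adj T = S"
proof -
  have "\<forall>x y. cinner (T x) y = cinner x (adj T y)"
    using someI[of "\<lambda>S. \<forall>x y. cinner (T x) y = cinner x (S y)", OF allI[OF allI[OF assms]]]
    unfolding adj_def by blast
  then show ?thesis using assms by (intro ext cinner_ext) metis
qed

lemma bounded_clinear_adj:
  fixes T :: "'a::chilbert_space \<Rightarrow> 'b::chilbert_space"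
  assumes T: "bounded_clinear T"
  shows "bounded_clinear (adj T)"
proof (rule bounded_clinearI[where K = "onorm T"])
  fix y z show "adj T (y + z) = adj T y + adj T z"
    by (rule cinner_ext) (simp add: cinner_adj_right[OF T, symmetric] cinner_add_right)
next
  fix a y show "adj T (scaleC a y) = scaleC a (adj T y)"
    by (rule cinner_ext) (simp add: cinner_adj_right[OF T, symmetric] cinner_scaleC_right)
next
  fix y
  have "(norm (adj T y))\<^sup>2 = Re (cinner (T (adj T y)) y)"
    by (simp add: cinner_adj_right[OF T] Re_cinner_self)
  also have "\<dots> \<le> norm (T (adj T y)) * norm y" by (rule Re_cinner_le)
  also have "\<dots> \<le> onorm T * norm (adj T y) * norm y"
    using bounded_clinear_norm_le[OF T] by (simp add: mult_right_mono)
  finally have "norm (adj T y) * norm (adj T y) \<le> (norm y * onorm T) * norm (adj T y)"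
    by (simp add: power2_eq_square ac_simps)
  then show "norm (adj T y) \<le> norm y * onorm T"
    using bounded_clinear_onorm_nonneg[OF T] by (cases "adj T y = 0") auto
qed

lemma adj_adj:
  fixes T :: "'a::chilbert_space \<Rightarrow> 'b::chilbert_space"
  assumes T: "bounded_clinear T"
  shows "adj (adj T) = T"
  by (rule adj_eqI) (metis cinner_adj_right[OF T] cinner_commute)

lemma poly_op_eq_sum_lessThan:
  assumes "degree p < n"
  shows "poly_op p A x = (\<Sum>i<n. coeff p i *\<^sub>R (A ^^ i) x)"
  unfolding poly_op_def
  using assms by (intro sum.mono_neutral_left) (auto simp: coeff_eq_0)

lemma poly_op_0 [simp]: "poly_op 0 A x = 0"
  by (simp add: poly_op_def)

lemma poly_op_pCons: "poly_op (pCons a p) A x = a *\<^sub>R x + poly_op p A (A x)"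
proof -
  define m where "m = Suc (degree p)"
  have "degree (pCons a p) < Suc m" using degree_pCons_le[of a p] by (simp add: m_def)
  then have "poly_op (pCons a p) A x = (\<Sum>i<Suc m. coeff (pCons a p) i *\<^sub>R (A ^^ i) x)"
    by (rule poly_op_eq_sum_lessThan)
  also have "\<dots> = a *\<^sub>R x + (\<Sum>i<m. coeff p i *\<^sub>R (A ^^ i) (A x))"
    unfolding sum.lessThan_Suc_shift by (simp add: funpow_Suc_right del: funpow.simps)
  also have "(\<Sum>i<m. coeff p i *\<^sub>R (A ^^ i) (A x)) = poly_op p A (A x)"
    by (rule poly_op_eq_sum_lessThan [symmetric]) (simp add: m_def)
  finally show ?thesis .
qed

lemma poly_op_const [simp]: "poly_op [:c:] A x = c *\<^sub>R x"
  by (simp add: poly_op_pCons)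

lemma poly_op_1 [simp]: "poly_op 1 A x = x"
  by (simp add: one_pCons poly_op_pCons)

lemma poly_op_X: "poly_op [:0, 1:] A x = A x"
  by (simp add: poly_op_pCons)

lemma poly_op_add: "poly_op (p + q) A x = poly_op p A x + poly_op q A x"
proof -
  define n where "n = Suc (max (degree p) (degree q))"
  have "degree (p + q) < n" using degree_add_le_max[of p q] by (simp add: n_def)
  then show ?thesis
    by (simp add: poly_op_eq_sum_lessThan[of _ n] n_def scaleR_add_left sum.distrib)
qed

lemma poly_op_diff: "poly_op (p - q) A x = poly_op p A x - poly_op q A x"
proof -
  define n where "n = Suc (max (degree p) (degree q))"
  have "degree (p - q) < n" using degree_diff_le_max[of p q] by (simp add: n_def)
  then show ?thesis
    by (simp add: poly_op_eq_sum_lessThan[of _ n] n_def scaleR_diff_left sum_subtractf)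
qed

lemma poly_op_smult: "poly_op (smult c p) A x = c *\<^sub>R poly_op p A x"
proof -
  have "degree (smult c p) < Suc (degree p)" using degree_smult_le[of c p] by simp
  then show ?thesis
    by (simp only: poly_op_eq_sum_lessThan[of _ "Suc (degree p)"] coeff_smult scaleR_scaleR
        scaleR_sum_right lessI)
qed

lemma poly_op_sum: "poly_op (\<Sum>j\<in>J. f j) A x = (\<Sum>j\<in>J. poly_op (f j) A x)"
  by (induct J rule: infinite_finite_induct) (auto simp: poly_op_add)

lemma bounded_clinear_poly_op:
  assumes A: "bounded_clinear A"
  shows "bounded_clinear (poly_op p A)"
proof (induct p rule: pCons_induct)
  case 0
  then show ?case by (intro bounded_clinearI[of _ 0]) simp_all
next
  case (pCons a p)
  then obtain K where K: "\<And>x. norm (poly_op p A x) \<le> norm x * K"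
    by (auto simp: bounded_clinear_def)
  have "norm (poly_op (pCons a p) A x) \<le> norm x * (\<bar>a\<bar> + onorm A * \<bar>K\<bar>)" for x
  proof -
    have "norm (poly_op (pCons a p) A x) \<le> \<bar>a\<bar> * norm x + norm (poly_op p A (A x))"
      by (simp add: poly_op_pCons norm_triangle_le)
    also have "norm (poly_op p A (A x)) \<le> norm (A x) * \<bar>K\<bar>"
      using K[of "A x"] by (meson abs_ge_self mult_left_mono norm_ge_zero order_trans)
    also have "\<dots> \<le> (onorm A * norm x) * \<bar>K\<bar>"
      by (rule mult_right_mono[OF bounded_clinear_norm_le[OF A]]) simp
    finally show ?thesis by (simp add: algebra_simps)
  qed
  with pCons show ?case
    by (intro bounded_clinearI)
       (simp_all add: poly_op_pCons clinear_add[OF A] clinear_scaleC[OF A] clinear_add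
          clinear_scaleC scaleR_add_right scaleC_add_right scaleC_scaleR_commute)
qed

lemma poly_op_commute:
  assumes A: "bounded_clinear A"
  shows "A (poly_op p A x) = poly_op p A (A x)"
  by (induct p arbitrary: x rule: pCons_induct)
     (simp_all add: clinear_zero[OF A] poly_op_pCons clinear_add[OF A] clinear_scaleR[OF A])

lemma poly_op_mult:
  assumes A: "bounded_clinear A"
  shows "poly_op (p * q) A x = poly_op p A (poly_op q A x)"
proof (induct p arbitrary: x rule: pCons_induct)
  case (pCons a p)
  have "poly_op (pCons a p * q) A x = a *\<^sub>R poly_op q A x + poly_op (p * q) A (A x)"
    by (simp add: mult_pCons_left poly_op_add poly_op_smult poly_op_pCons)
  then show ?case by (simp add: pCons poly_op_commute[OF A] poly_op_pCons)
qed simp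

definition selfadjoint :: "('a::complex_inner \<Rightarrow> 'a) \<Rightarrow> bool" where
  "selfadjoint A \<longleftrightarrow> (\<forall>x y. cinner (A x) y = cinner x (A y))"

lemma cinner_poly_op_selfadjoint:
  assumes A: "bounded_clinear A" and sa: "selfadjoint A"
  shows "cinner (poly_op p A x) y = cinner x (poly_op p A y)"
proof (induct p arbitrary: x y rule: pCons_induct)
  case (pCons a p)
  have "cinner (poly_op (pCons a p) A x) y = of_real a * cinner x y + cinner (A x) (poly_op p A y)"
    by (simp add: poly_op_pCons cinner_add_left cinner_scaleR_left pCons)
  also have "\<dots> = of_real a * cinner x y + cinner x (A (poly_op p A y))"
    using sa by (simp add: selfadjoint_def)
  also have "\<dots> = cinner x (poly_op (pCons a p) A y)"
    by (simp add: poly_op_pCons cinner_add_right cinner_scaleR_right poly_op_commute[OF A])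
  finally show ?case .
qed simp

lemma poly_op_zero_operator: "poly_op p (\<lambda>x. 0) x = poly p 0 *\<^sub>R x"
  by (induct p arbitrary: x rule: pCons_induct) (simp_all add: poly_op_pCons)
section \<open>Bernstein expansions on \<open>[0, K]\<close>\<close>

lemma abs_prod_diff_le_sum:
  fixes u v :: "nat \<Rightarrow> real"
  assumes "\<And>i. i < m \<Longrightarrow> \<bar>u i\<bar> \<le> 1" "\<And>i. i < m \<Longrightarrow> \<bar>v i\<bar> \<le> 1"
  shows "\<bar>(\<Prod>i<m. u i) - (\<Prod>i<m. v i)\<bar> \<le> (\<Sum>i<m. \<bar>u i - v i\<bar>)"
  using assms
proof (induct m)
  case 0 then show ?case by simp
next
  case (Suc m)
  have IH: "\<bar>(\<Prod>i<m. u i) - (\<Prod>i<m. v i)\<bar> \<le> (\<Sum>i<m. \<bar>u i - v i\<bar>)"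
    using Suc by auto
  have pv: "\<bar>\<Prod>i<m. v i\<bar> \<le> 1"
    unfolding abs_prod using Suc.prems(2) by (intro prod_le_1) auto
  have um: "\<bar>u m\<bar> \<le> 1" using Suc.prems(1) by auto
  have "(\<Prod>i<Suc m. u i) - (\<Prod>i<Suc m. v i) =
      u m * ((\<Prod>i<m. u i) - (\<Prod>i<m. v i)) + (u m - v m) * (\<Prod>i<m. v i)"
    by (simp add: algebra_simps)
  then have "\<bar>(\<Prod>i<Suc m. u i) - (\<Prod>i<Suc m. v i)\<bar> \<le>
      \<bar>u m\<bar> * \<bar>(\<Prod>i<m. u i) - (\<Prod>i<m. v i)\<bar> + \<bar>u m - v m\<bar> * \<bar>\<Prod>i<m. v i\<bar>"
    by (metis abs_mult abs_triangle_ineq)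
  also have "\<dots> \<le> 1 * \<bar>(\<Prod>i<m. u i) - (\<Prod>i<m. v i)\<bar> + \<bar>u m - v m\<bar> * 1"
    by (intro add_mono mult_mono) (use um pv in auto)
  also have "\<dots> \<le> (\<Sum>i<Suc m. \<bar>u i - v i\<bar>)" using IH by simp
  finally show ?case .
qed

lemma binomial_ratio_eq_prod:
  assumes "m \<le> N"
  shows "real (j choose m) / real (N choose m) = (\<Prod>i<m. (real j - real i) / (real N - real i))"
proof -
  have a: "real (j choose m) * fact m = (\<Prod>i<m. real j - real i)"
    using gbinomial_mult_fact'[of "real j" m] by (simp add: binomial_gbinomial atLeast0LessThan)
  have b: "real (N choose m) * fact m = (\<Prod>i<m. real N - real i)"
    using gbinomial_mult_fact'[of "real N" m] by (simp add: binomial_gbinomial atLeast0LessThan)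
  have "real (j choose m) / real (N choose m) = (real (j choose m) * fact m) / (real (N choose m) * fact m)"
    by simp
  also have "\<dots> = (\<Prod>i<m. real j - real i) / (\<Prod>i<m. real N - real i)" using a b by simp
  also have "\<dots> = (\<Prod>i<m. (real j - real i) / (real N - real i))" by (simp add: prod_dividef)
  finally show ?thesis .
qed

lemma binomial_ratio_factor_bounds:
  fixes i j m N :: nat
  assumes "i < m" "2 * m \<le> N" "j \<le> N"
  shows "\<bar>(real j - real i) / (real N - real i)\<bar> \<le> 1"
    and "\<bar>(real j - real i) / (real N - real i) - real j / real N\<bar> \<le> 2 * real m / real N"
proof -
  have Ni: "real N - real i > 0" and N0: "real N > 0" using assms by linarith+
  show "\<bar>(real j - real i) / (real N - real i)\<bar> \<le> 1"
    using Ni assms by (simp add: abs_le_iff divide_le_eq_1 le_divide_eq)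
  have "(real j - real i) / (real N - real i) - real j / real N =
      - (real i * (real N - real j)) / (real N * (real N - real i))"
    using Ni N0 by (simp add: field_simps)
  then have "\<bar>(real j - real i) / (real N - real i) - real j / real N\<bar> =
      real i * (real N - real j) / (real N * (real N - real i))"
    using Ni N0 assms by (simp add: abs_minus_cancel)
  also have "\<dots> \<le> real i * real N / (real N * (real N - real i))"
    using Ni N0 assms by (intro divide_right_mono mult_left_mono) auto
  also have "\<dots> = real i / (real N - real i)" using N0 by simp
  also have "\<dots> \<le> 2 * real m / real N"
  proof -
    have "real N \<le> 2 * (real N - real i)" "real i \<le> real m"
      using assms by (simp_all add: of_nat_le_iff [symmetric] del: of_nat_le_iff)
    then have "real i * real N \<le> 2 * real m * (real N - real i)"
      by (metis mult.assoc mult.commute mult_mono' of_nat_0_le_iff)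
    then show ?thesis using Ni N0 by (simp add: field_simps)
  qed
  finally show "\<bar>(real j - real i) / (real N - real i) - real j / real N\<bar> \<le> 2 * real m / real N" .
qed

lemma binomial_ratio_approx:
  fixes j m N :: nat
  assumes "2 * m \<le> N" "j \<le> N" "0 < N"
  shows "\<bar>real (j choose m) / real (N choose m) - (real j / real N) ^ m\<bar> \<le> 2 * real m ^ 2 / real N"
proof -
  have "\<bar>real (j choose m) / real (N choose m) - (real j / real N) ^ m\<bar> =
      \<bar>(\<Prod>i<m. (real j - real i) / (real N - real i)) - (\<Prod>i<m. real j / real N)\<bar>"
    using assms by (simp add: binomial_ratio_eq_prod)
  also have "\<dots> \<le> (\<Sum>i<m. \<bar>(real j - real i) / (real N - real i) - real j / real N\<bar>)"
    using binomial_ratio_factor_bounds(1)[OF _ assms(1,2)] assms by (intro abs_prod_diff_le_sum) auto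
  also have "\<dots> \<le> (\<Sum>i<m. 2 * real m / real N)"
    using binomial_ratio_factor_bounds(2)[OF _ assms(1,2)] by (intro sum_mono) auto
  also have "\<dots> = 2 * real m ^ 2 / real N" by (simp add: power2_eq_square)
  finally show ?thesis .
qed

lemma sum_binomial_times_binomial:
  fixes s t :: real
  assumes "m \<le> N"
  shows "(\<Sum>j\<le>N. real (j choose m) * (real (N choose j) * s ^ j * t ^ (N - j))) =
    real (N choose m) * s ^ m * (s + t) ^ (N - m)"
proof -
  have "(\<Sum>j\<le>N. real (j choose m) * (real (N choose j) * s ^ j * t ^ (N - j))) =
        (\<Sum>j\<in>{m..N}. real (j choose m) * (real (N choose j) * s ^ j * t ^ (N - j)))"
    by (rule sum.mono_neutral_right) auto
  also have "\<dots> = (\<Sum>j\<in>{m..N}. real (N choose m) * (real ((N - m) choose (j - m)) * s ^ j * t ^ (N - j)))"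
  proof (rule sum.cong[OF refl])
    fix j assume "j \<in> {m..N}"
    then have "(N choose j) * (j choose m) = (N choose m) * ((N - m) choose (j - m))"
      by (intro choose_mult) auto
    then have "real (j choose m) * real (N choose j) = real (N choose m) * real ((N - m) choose (j - m))"
      by (metis of_nat_mult mult.commute)
    then show "real (j choose m) * (real (N choose j) * s ^ j * t ^ (N - j)) =
        real (N choose m) * (real ((N - m) choose (j - m)) * s ^ j * t ^ (N - j))"
      by (metis (no_types, lifting) mult.assoc)
  qed
  also have "\<dots> = (\<Sum>i\<in>{0..N-m}.
      real (N choose m) * (real ((N - m) choose i) * s ^ (i + m) * t ^ (N - (i + m))))"
  proof -
    have "{m..N} = {0+m..(N-m)+m}" using assms by simp
    then show ?thesis by (simp only: sum.shift_bounds_cl_nat_ivl) simp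
  qed
  also have "\<dots> = real (N choose m) * s ^ m * (\<Sum>i\<le>N-m. real ((N - m) choose i) * s ^ i * t ^ (N - m - i))"
    by (simp add: sum_distrib_left atLeast0AtMost power_add algebra_simps)
  also have "\<dots> = real (N choose m) * s ^ m * (s + t) ^ (N - m)"
    by (simp add: binomial_ring)
  finally show ?thesis .
qed

definition bernstein_poly :: "real \<Rightarrow> nat \<Rightarrow> nat \<Rightarrow> real poly" where
  "bernstein_poly K N j = smult (real (N choose j) / K ^ N) ([:0, 1:] ^ j * [:K, -1:] ^ (N - j))"

lemma poly_bernstein_poly:
  "poly (bernstein_poly K N j) s = real (N choose j) / K ^ N * (s ^ j * (K - s) ^ (N - j))"
  by (simp add: bernstein_poly_def poly_power)

lemma sum_bernstein_poly:
  assumes "K \<noteq> 0"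
  shows "(\<Sum>j\<le>N. bernstein_poly K N j) = 1"
proof -
  have "poly (\<Sum>j\<le>N. bernstein_poly K N j) s = poly 1 s" for s
  proof -
    have "poly (\<Sum>j\<le>N. bernstein_poly K N j) s =
        (\<Sum>j\<le>N. real (N choose j) * s ^ j * (K - s) ^ (N - j)) / K ^ N"
      by (simp add: poly_sum poly_bernstein_poly sum_divide_distrib algebra_simps)
    also have "\<dots> = (s + (K - s)) ^ N / K ^ N" by (simp only: binomial_ring)
    also have "\<dots> = 1" using assms by simp
    finally show ?thesis by simp
  qed
  then show ?thesis using poly_eq_poly_eq_iff by blast
qed

definition bernstein_coeff :: "real poly \<Rightarrow> real \<Rightarrow> nat \<Rightarrow> nat \<Rightarrow> real" where
  "bernstein_coeff q K N j = (\<Sum>m\<le>degree q. coeff q m * K ^ m * (real (j choose m) / real (N choose m)))"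

lemma power_eq_sum_bernstein_poly:
  assumes "K \<noteq> 0" "m \<le> N"
  shows "s ^ m = (\<Sum>j\<le>N. K ^ m * (real (j choose m) / real (N choose m)) * poly (bernstein_poly K N j) s)"
proof -
  have Nm: "real (N choose m) \<noteq> 0" using assms by simp
  have "(\<Sum>j\<le>N. K ^ m * (real (j choose m) / real (N choose m)) * poly (bernstein_poly K N j) s) =
      K ^ m / (real (N choose m) * K ^ N) *
        (\<Sum>j\<le>N. real (j choose m) * (real (N choose j) * s ^ j * (K - s) ^ (N - j)))"
    by (simp add: poly_bernstein_poly sum_distrib_left algebra_simps)
  also have "\<dots> = K ^ m / (real (N choose m) * K ^ N) * (real (N choose m) * s ^ m * K ^ (N - m))"
    using sum_binomial_times_binomial[OF assms(2), of s "K - s"] by simp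
  also have "\<dots> = s ^ m * (K ^ m * K ^ (N - m) / K ^ N)" using Nm by (simp add: field_simps)
  also have "K ^ m * K ^ (N - m) = K ^ N" using assms by (simp add: power_add[symmetric])
  finally show ?thesis using assms by simp
qed

lemma eq_sum_bernstein_poly:
  assumes "K \<noteq> 0" "degree q \<le> N"
  shows "q = (\<Sum>j\<le>N. smult (bernstein_coeff q K N j) (bernstein_poly K N j))"
proof -
  have "poly q s = poly (\<Sum>j\<le>N. smult (bernstein_coeff q K N j) (bernstein_poly K N j)) s" for s
  proof -
    have "poly q s = (\<Sum>m\<le>degree q. coeff q m * s ^ m)" by (simp add: poly_altdef)
    also have "\<dots> = (\<Sum>m\<le>degree q. coeff q m *
        (\<Sum>j\<le>N. K ^ m * (real (j choose m) / real (N choose m)) * poly (bernstein_poly K N j) s))"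
    proof (intro sum.cong refl)
      fix m assume "m \<in> {..degree q}"
      then have "m \<le> N" using assms by auto
      show "coeff q m * s ^ m = coeff q m *
          (\<Sum>j\<le>N. K ^ m * (real (j choose m) / real (N choose m)) * poly (bernstein_poly K N j) s)"
        using power_eq_sum_bernstein_poly[OF assms(1) \<open>m \<le> N\<close>] by (rule arg_cong)
    qed
    also have "\<dots> = (\<Sum>j\<le>N. bernstein_coeff q K N j * poly (bernstein_poly K N j) s)"
      unfolding bernstein_coeff_def sum_distrib_left sum_distrib_right
      by (subst sum.swap) (simp add: algebra_simps)
    also have "\<dots> = poly (\<Sum>j\<le>N. smult (bernstein_coeff q K N j) (bernstein_poly K N j)) s"
      by (simp add: poly_sum)
    finally show ?thesis .
  qed
  then show ?thesis using poly_eq_poly_eq_iff by blast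
qed

lemma bernstein_coeff_approx:
  assumes "2 * degree q \<le> N" "j \<le> N" "0 < N"
  shows "\<bar>bernstein_coeff q K N j - poly q (K * real j / real N)\<bar> \<le>
    (\<Sum>m\<le>degree q. \<bar>coeff q m\<bar> * \<bar>K\<bar> ^ m * (2 * real m ^ 2)) / real N"
proof -
  have "poly q (K * real j / real N) = (\<Sum>m\<le>degree q. coeff q m * K ^ m * (real j / real N) ^ m)"
    by (simp add: poly_altdef power_mult_distrib power_divide algebra_simps)
  then have "bernstein_coeff q K N j - poly q (K * real j / real N) =
      (\<Sum>m\<le>degree q. coeff q m * K ^ m * (real (j choose m) / real (N choose m) - (real j / real N) ^ m))"
    by (simp add: bernstein_coeff_def sum_subtractf algebra_simps)
  then have "\<bar>bernstein_coeff q K N j - poly q (K * real j / real N)\<bar> \<le>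
      (\<Sum>m\<le>degree q. \<bar>coeff q m * K ^ m * (real (j choose m) / real (N choose m) - (real j / real N) ^ m)\<bar>)"
    by (simp add: sum_abs)
  also have "\<dots> \<le> (\<Sum>m\<le>degree q. \<bar>coeff q m\<bar> * \<bar>K\<bar> ^ m * (2 * real m ^ 2 / real N))"
  proof (intro sum_mono)
    fix m assume "m \<in> {..degree q}"
    then have "2 * m \<le> N" using assms by auto
    then have bnd: "\<bar>real (j choose m) / real (N choose m) - (real j / real N) ^ m\<bar> \<le> 2 * real m ^ 2 / real N"
      using assms by (intro binomial_ratio_approx) auto
    then show "\<bar>coeff q m * K ^ m * (real (j choose m) / real (N choose m) - (real j / real N) ^ m)\<bar>
        \<le> \<bar>coeff q m\<bar> * \<bar>K\<bar> ^ m * (2 * real m ^ 2 / real N)"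
      unfolding abs_mult power_abs by (rule mult_left_mono) simp_all
  qed
  also have "\<dots> = (\<Sum>m\<le>degree q. \<bar>coeff q m\<bar> * \<bar>K\<bar> ^ m * (2 * real m ^ 2)) / real N"
    by (simp add: sum_divide_distrib)
  finally show ?thesis .
qed



section \<open>Positive operators and the norm of \<open>p(A)\<close>\<close>

definition positive_op :: "('a::complex_inner \<Rightarrow> 'a) \<Rightarrow> bool" where
  "positive_op A \<longleftrightarrow> bounded_clinear A \<and> selfadjoint A \<and> (\<forall>x. 0 \<le> Re (cinner (A x) x))"

definition positive_poly_op :: "real poly \<Rightarrow> ('a::complex_inner \<Rightarrow> 'a) \<Rightarrow> bool" where
  "positive_poly_op p A \<longleftrightarrow> (\<forall>x. 0 \<le> Re (cinner (poly_op p A x) x))"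

lemma positive_op_bounded_clinear: "positive_op A \<Longrightarrow> bounded_clinear A"
  by (simp add: positive_op_def)

lemma positive_op_selfadjoint: "positive_op A \<Longrightarrow> selfadjoint A"
  by (simp add: positive_op_def)

lemma positive_op_onorm_nonneg: "positive_op A \<Longrightarrow> 0 \<le> onorm A"
  by (simp add: positive_op_def bounded_clinear_onorm_nonneg)

lemma positive_poly_op_add: "positive_poly_op p A \<Longrightarrow> positive_poly_op q A \<Longrightarrow> positive_poly_op (p + q) A"
  by (simp add: positive_poly_op_def poly_op_add cinner_add_left)

lemma positive_poly_op_smult: "positive_poly_op p A \<Longrightarrow> 0 \<le> c \<Longrightarrow> positive_poly_op (smult c p) A"
  by (simp add: positive_poly_op_def poly_op_smult cinner_scaleR_left)

lemma positive_poly_op_1: "positive_poly_op 1 A"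
  by (simp add: positive_poly_op_def Re_cinner_self)

lemma positive_poly_op_X: "positive_op A \<Longrightarrow> positive_poly_op [:0, 1:] A"
  by (simp add: positive_poly_op_def positive_op_def poly_op_X)

lemma Re_cinner_le_onorm:
  assumes "bounded_clinear A"
  shows "Re (cinner (A x) x) \<le> onorm A * (norm x)\<^sup>2"
proof -
  have "Re (cinner (A x) x) \<le> norm (A x) * norm x" by (rule Re_cinner_le)
  also have "\<dots> \<le> onorm A * norm x * norm x"
    by (rule mult_right_mono[OF bounded_clinear_norm_le[OF assms]]) simp
  finally show ?thesis by (simp add: power2_eq_square mult.assoc)
qed

lemma positive_poly_op_complement:
  assumes "positive_op A"
  shows "positive_poly_op [:onorm A, -1:] A"
  using Re_cinner_le_onorm[OF positive_op_bounded_clinear[OF assms]]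
  by (simp add: positive_poly_op_def poly_op_pCons cinner_diff_left cinner_scaleR_left Re_cinner_self)

lemma positive_poly_op_square_mult:
  assumes A: "positive_op A" and p: "positive_poly_op p A"
  shows "positive_poly_op (w * w * p) A"
  unfolding positive_poly_op_def
proof
  fix x
  note A' = positive_op_bounded_clinear[OF A]
  have "cinner (poly_op (w * w * p) A x) x = cinner (poly_op w A (poly_op p A (poly_op w A x))) x"
    by (simp add: poly_op_mult[OF A'] mult.commute[of w p] mult.assoc)
  also have "\<dots> = cinner (poly_op p A (poly_op w A x)) (poly_op w A x)"
    by (rule cinner_poly_op_selfadjoint[OF A' positive_op_selfadjoint[OF A]])
  finally show "0 \<le> Re (cinner (poly_op (w * w * p) A x) x)"
    using p by (simp add: positive_poly_op_def)
qed

lemma positive_poly_op_X_complement: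
  assumes A: "positive_op A" and K: "onorm A \<noteq> 0"
  shows "positive_poly_op ([:0, 1:] * [:onorm A, -1:]) A"
proof -
  define X :: "real poly" where "X = [:0, 1:]"
  define Y where "Y = [:onorm A, -1:]"
  \<comment> \<open>\<open>X + Y\<close> is the constant \<open>\<parallel>A\<parallel>\<close>\<close>
  have eq: "X * Y = smult (1 / onorm A) (Y * Y * X + X * X * Y)"
    by (rule poly_eqI) (use K in \<open>simp add: X_def Y_def coeff_eq_0 field_simps\<close>)
  have "positive_poly_op (Y * Y * X + X * X * Y) A"
    using positive_poly_op_X[OF A] positive_poly_op_complement[OF A]
    by (intro positive_poly_op_add positive_poly_op_square_mult[OF A]) (simp_all add: X_def Y_def)
  then have "positive_poly_op (X * Y) A"
    unfolding eq using positive_op_onorm_nonneg[OF A] by (intro positive_poly_op_smult) simp_all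
  then show ?thesis by (simp only: X_def Y_def)
qed

lemma positive_poly_op_X_pow_complement_pow:
  assumes A: "positive_op A" and K: "onorm A \<noteq> 0"
  shows "positive_poly_op ([:0, 1:] ^ j * [:onorm A, -1:] ^ k) A"
proof -
  define X :: "real poly" where "X = [:0, 1:]"
  define Y where "Y = [:onorm A, -1:]"
  define w where "w = X ^ (j div 2) * Y ^ (k div 2)"
  have j: "j = j div 2 + j div 2 + j mod 2" and k: "k = k div 2 + k div 2 + k mod 2" by presburger+
  have eq: "X ^ j * Y ^ k = w * w * (X ^ (j mod 2) * Y ^ (k mod 2))"
    unfolding w_def by (subst j, subst k, simp only: power_add) (simp add: algebra_simps)
  have "j mod 2 = 0 \<or> j mod 2 = 1" "k mod 2 = 0 \<or> k mod 2 = 1" by auto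
  then have "positive_poly_op (X ^ (j mod 2) * Y ^ (k mod 2)) A"
    using positive_poly_op_1 positive_poly_op_X[OF A] positive_poly_op_complement[OF A]
      positive_poly_op_X_complement[OF A K]
    by (auto simp: X_def Y_def)
  then have "positive_poly_op (X ^ j * Y ^ k) A"
    unfolding eq by (rule positive_poly_op_square_mult[OF A])
  then show ?thesis by (simp only: X_def Y_def)
qed

lemma positive_poly_op_bernstein_poly:
  assumes "positive_op A" "onorm A \<noteq> 0"
  shows "positive_poly_op (bernstein_poly (onorm A) N j) A"
  unfolding bernstein_poly_def
  using assms positive_op_onorm_nonneg[OF assms(1)]
  by (intro positive_poly_op_smult positive_poly_op_X_pow_complement_pow) simp_all

text \<open>A polynomial bounded by \<open>d\<close> on \<open>[0, K]\<close> has Bernstein coefficients at most \<open>d + O(1/N)\<close>,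
  and the Bernstein basis polynomials of \<open>A\<close> are positive and sum to the identity.\<close>
lemma Re_cinner_poly_op_le_approx:
  assumes A: "positive_op A" and K: "onorm A \<noteq> 0"
    and q: "\<And>s. s \<in> {0..onorm A} \<Longrightarrow> poly q s \<le> d"
    and N: "2 * degree q \<le> N" "0 < N"
  shows "Re (cinner (poly_op q A x) x) \<le>
    (d + (\<Sum>m\<le>degree q. \<bar>coeff q m\<bar> * onorm A ^ m * (2 * real m ^ 2)) / real N) * (norm x)\<^sup>2"
proof -
  define K where "K = onorm A"
  have "0 < K" using K positive_op_onorm_nonneg[OF A] by (simp add: K_def)
  define D where "D = (\<Sum>m\<le>degree q. \<bar>coeff q m\<bar> * K ^ m * (2 * real m ^ 2)) / real N"
  define r where "r j = Re (cinner (poly_op (bernstein_poly K N j) A x) x)" for j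
  have r_nonneg: "0 \<le> r j" for j
    using positive_poly_op_bernstein_poly[OF A K] by (simp add: r_def positive_poly_op_def K_def)
  have "(\<Sum>j\<le>N. bernstein_poly K N j) = 1"
    using \<open>0 < K\<close> by (intro sum_bernstein_poly) simp
  then have sum_r: "(\<Sum>j\<le>N. r j) = (norm x)\<^sup>2"
    unfolding r_def Re_sum [symmetric] cinner_sum_left [symmetric] poly_op_sum [symmetric]
    by (simp add: Re_cinner_self)
  have coeff_le: "bernstein_coeff q K N j \<le> d + D" if "j \<le> N" for j
  proof -
    have "K * real j / real N \<in> {0..K}" using \<open>0 < K\<close> N that by (auto simp: field_simps)
    then have "poly q (K * real j / real N) \<le> d" using q unfolding K_def by blast
    moreover have "\<bar>bernstein_coeff q K N j - poly q (K * real j / real N)\<bar> \<le> D"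
      unfolding D_def using N that \<open>0 < K\<close> bernstein_coeff_approx[of q N j K] by simp
    ultimately show ?thesis by linarith
  qed
  define Q where "Q = (\<Sum>j\<le>N. smult (bernstein_coeff q K N j) (bernstein_poly K N j))"
  have "q = Q"
    unfolding Q_def using \<open>0 < K\<close> N by (intro eq_sum_bernstein_poly) simp_all
  then have "Re (cinner (poly_op q A x) x) = Re (cinner (poly_op Q A x) x)" by (simp only:)
  also have "\<dots> = (\<Sum>j\<le>N. bernstein_coeff q K N j * r j)"
    by (simp add: Q_def r_def poly_op_sum poly_op_smult cinner_sum_left cinner_scaleR_left)
  also have "\<dots> \<le> (\<Sum>j\<le>N. (d + D) * r j)"
    using coeff_le r_nonneg by (intro sum_mono mult_right_mono) auto
  also have "\<dots> = (d + D) * (norm x)\<^sup>2" by (simp add: sum_distrib_left [symmetric] sum_r)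
  finally show ?thesis by (simp add: D_def K_def)
qed

lemma Re_cinner_poly_op_le:
  assumes A: "positive_op A" and K: "onorm A \<noteq> 0"
    and q: "\<And>s. s \<in> {0..onorm A} \<Longrightarrow> poly q s \<le> d"
  shows "Re (cinner (poly_op q A x) x) \<le> d * (norm x)\<^sup>2"
proof -
  define E where "E = (\<Sum>m\<le>degree q. \<bar>coeff q m\<bar> * onorm A ^ m * (2 * real m ^ 2))"
  have "(\<lambda>N. (d + E / real N) * (norm x)\<^sup>2) \<longlonglongrightarrow> (d + E * 0) * (norm x)\<^sup>2"
    unfolding divide_inverse by (intro tendsto_intros lim_inverse_n)
  moreover have "Re (cinner (poly_op q A x) x) \<le> (d + E / real N) * (norm x)\<^sup>2"
    if "Suc (2 * degree q) \<le> N" for N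
    unfolding E_def using that by (intro Re_cinner_poly_op_le_approx[OF A K q]) simp_all
  ultimately show ?thesis by (intro LIMSEQ_le_const) auto
qed

lemma norm_poly_op_le:
  assumes A: "positive_op A" and p: "\<And>s. s \<in> {0..onorm A} \<Longrightarrow> \<bar>poly p s\<bar> \<le> c"
  shows "norm (poly_op p A x) \<le> c * norm x"
proof (cases "onorm A = 0")
  case True
  have "A = (\<lambda>x. 0)"
    using True onorm_eq_0[OF bounded_clinear_imp_bounded_linear[OF positive_op_bounded_clinear[OF A]]]
    by auto
  then have "poly_op p A x = poly p 0 *\<^sub>R x" by (simp add: poly_op_zero_operator)
  moreover have "\<bar>poly p 0\<bar> \<le> c" using p True by simp
  ultimately show ?thesis by (simp add: mult_right_mono)
next
  case False
  note A' = positive_op_bounded_clinear[OF A]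
  have "0 \<le> c" using p[of 0] positive_op_onorm_nonneg[OF A] by auto
  have "cinner (poly_op p A (poly_op p A x)) x = cinner (poly_op p A x) (poly_op p A x)"
    by (rule cinner_poly_op_selfadjoint[OF A' positive_op_selfadjoint[OF A]])
  then have "(norm (poly_op p A x))\<^sup>2 = Re (cinner (poly_op p A (poly_op p A x)) x)"
    by (simp add: Re_cinner_self)
  also have "\<dots> = Re (cinner (poly_op (p * p) A x) x)" by (simp add: poly_op_mult[OF A'])
  also have "\<dots> \<le> c\<^sup>2 * (norm x)\<^sup>2"
  proof (rule Re_cinner_poly_op_le[OF A False])
    fix s assume "s \<in> {0..onorm A}"
    then have "\<bar>poly p s\<bar>\<^sup>2 \<le> c\<^sup>2" using p by (intro power_mono) simp_all
    then show "poly (p * p) s \<le> c\<^sup>2" by (simp add: power2_eq_square)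
  qed
  finally have "(norm (poly_op p A x))\<^sup>2 \<le> (c * norm x)\<^sup>2" by (simp add: power_mult_distrib)
  then show ?thesis by (rule power2_le_imp_le) (simp add: \<open>0 \<le> c\<close>)
qed

section \<open>Powers of a positive operator\<close>

lemma Weierstrass_real_poly:
  fixes f :: "real \<Rightarrow> real"
  assumes L: "0 < L" and f: "continuous_on {0..L} f"
  shows "\<exists>P. uniform_limit {0..L} (\<lambda>n. poly (P n)) f sequentially"
proof -
  define g where "g u = f (L * u)" for u
  have g: "continuous_on {0..1} g"
    unfolding g_def
    by (rule continuous_on_compose2[OF f]) (auto intro!: continuous_intros simp: L mult_le_cancel_left1 less_imp_le)
  define P where "P n = (\<Sum>k\<le>n. smult (g (real k / real n) * real (n choose k))
    ([:0, 1 / L:] ^ k * [:1, - 1 / L:] ^ (n - k)))" for n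
  have poly_P: "poly (P n) s = (\<Sum>k\<le>n. g (real k / real n) * Bernstein n k (s / L))" for n s
    by (simp add: P_def poly_sum poly_power Bernstein_def algebra_simps)
  have "uniform_limit {0..L} (\<lambda>n. poly (P n)) f sequentially"
  proof (rule uniform_limitI)
    fix e :: real assume e: "0 < e"
    obtain N where N: "\<And>n x. N \<le> n \<Longrightarrow> x \<in> {0..1} \<Longrightarrow> \<bar>g x - (\<Sum>k\<le>n. g (k/n) * Bernstein n k x)\<bar> < e"
      using Bernstein_Weierstrass[OF g e] by blast
    have "dist (poly (P n) s) (f s) < e" if "N \<le> n" "s \<in> {0..L}" for n s
      using N[of n "s / L"] that L by (simp add: poly_P g_def dist_real_def abs_minus_commute)
    then show "\<forall>\<^sub>F n in sequentially. \<forall>s\<in>{0..L}. dist (poly (P n) s) (f s) < e"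
      unfolding eventually_sequentially by blast
  qed
  then show ?thesis by blast
qed

lemma continuous_on_fc_fun:
  assumes "0 \<le> r"
  shows "continuous_on {0..L} (fc_fun r)"
proof (cases "r = 0")
  case False
  then have "continuous_on {0..L} (\<lambda>s. s powr r)"
    using assms by (intro continuous_on_powr') (auto intro!: continuous_intros)
  then show ?thesis using False by (simp add: fc_fun_def[abs_def])
qed (simp add: fc_fun_def[abs_def])

lemma fc_fun_nonneg: "0 \<le> fc_fun r s"
  by (simp add: fc_fun_def)

lemma fc_fun_mono: "0 \<le> r \<Longrightarrow> 0 \<le> s \<Longrightarrow> s \<le> K \<Longrightarrow> fc_fun r s \<le> fc_fun r K"
  by (simp add: fc_fun_def powr_mono2)

lemma fc_fun_mult: "0 \<le> r \<Longrightarrow> 0 \<le> q \<Longrightarrow> fc_fun r s * fc_fun q s = fc_fun (r + q) s"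
  by (auto simp: fc_fun_def powr_add)

lemma fc_fun_poly_approx:
  assumes "0 \<le> r"
  shows "\<exists>P. uniform_limit {0..L} (\<lambda>n. poly (P n)) (fc_fun r) sequentially"
proof -
  obtain P where "uniform_limit {0..max L 0 + 1} (\<lambda>n. poly (P n)) (fc_fun r) sequentially"
    using Weierstrass_real_poly[OF _ continuous_on_fc_fun[OF assms]] by fastforce
  then have "uniform_limit {0..L} (\<lambda>n. poly (P n)) (fc_fun r) sequentially"
    by (rule uniform_limit_on_subset) auto
  then show ?thesis by blast
qed

lemma poly_op_uniform_limit_close:
  assumes A: "positive_op A" and "0 < e"
    and P: "uniform_limit {0..onorm A} (\<lambda>n. poly (P n)) g sequentially"
    and Q: "uniform_limit {0..onorm A} (\<lambda>n. poly (Q n)) g sequentially"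
  shows "\<exists>N. \<forall>m\<ge>N. \<forall>n\<ge>N. norm (poly_op (P m) A x - poly_op (Q n) A x) < e"
proof -
  define e' where "e' = e / (2 * (norm x + 1))"
  have "0 < norm x + 1" by (simp add: add_nonneg_pos)
  then have "0 < e'" unfolding e'_def using \<open>0 < e\<close> by simp
  then obtain N where N: "\<And>n s. N \<le> n \<Longrightarrow> s \<in> {0..onorm A} \<Longrightarrow>
      dist (poly (P n) s) (g s) < e' \<and> dist (poly (Q n) s) (g s) < e'"
    using eventually_conj[OF uniform_limitD[OF P] uniform_limitD[OF Q]]
    unfolding eventually_sequentially by blast
  have "norm (poly_op (P m) A x - poly_op (Q n) A x) < e" if "N \<le> m" "N \<le> n" for m n
  proof -
    have "\<bar>poly (P m - Q n) s\<bar> \<le> 2 * e'" if "s \<in> {0..onorm A}" for s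
      using N[OF \<open>N \<le> m\<close> that] N[OF \<open>N \<le> n\<close> that] by (auto simp: dist_real_def)
    then have "norm (poly_op (P m - Q n) A x) \<le> 2 * e' * norm x"
      by (rule norm_poly_op_le[OF A])
    also have "\<dots> < e"
      using \<open>0 < e\<close> by (simp add: e'_def field_simps add_pos_nonneg)
    finally show ?thesis by (simp add: poly_op_diff)
  qed
  then show ?thesis by blast
qed

lemma Cauchy_poly_op:
  assumes "positive_op A" "uniform_limit {0..onorm A} (\<lambda>n. poly (P n)) g sequentially"
  shows "Cauchy (\<lambda>n. poly_op (P n) A x)"
  using poly_op_uniform_limit_close[OF assms(1) _ assms(2) assms(2)]
  by (intro metric_CauchyI) (simp add: dist_norm)

lemma poly_op_diff_tendsto_0:
  assumes "positive_op A"
    and "uniform_limit {0..onorm A} (\<lambda>n. poly (P n)) g sequentially"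
    and "uniform_limit {0..onorm A} (\<lambda>n. poly (Q n)) g sequentially"
  shows "(\<lambda>n. poly_op (P n) A x - poly_op (Q n) A x) \<longlonglongrightarrow> 0"
  using poly_op_uniform_limit_close[OF assms(1) _ assms(2,3)]
  by (intro LIMSEQ_I) fastforce

text \<open>This is what makes the definite description in \<open>opow\<close> well defined.\<close>
lemma opow_tendsto:
  fixes A :: "'a::chilbert_space \<Rightarrow> 'a"
  assumes A: "positive_op A" and r: "0 \<le> r"
    and P: "uniform_limit {0..onorm A} (\<lambda>n. poly (P n)) (fc_fun r) sequentially"
  shows "(\<lambda>n. poly_op (P n) A x) \<longlonglongrightarrow> opow A r x"
proof -
  define I where "I = {0..onorm A}"
  obtain P0 where P0: "uniform_limit I (\<lambda>n. poly (P0 n)) (fc_fun r) sequentially"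
    using fc_fun_poly_approx[OF r] unfolding I_def by blast
  define B where "B x = lim (\<lambda>n. poly_op (P0 n) A x)" for x
  have B: "(\<lambda>n. poly_op (P0 n) A x) \<longlonglongrightarrow> B x" for x
    using Cauchy_poly_op[OF A P0[unfolded I_def]] unfolding B_def
    by (simp add: Cauchy_convergent_iff convergent_LIMSEQ_iff)
  have B_limit: "\<forall>Q. uniform_limit I (\<lambda>n. poly (Q n)) (fc_fun r) sequentially
      \<longrightarrow> (\<forall>x. (\<lambda>n. poly_op (Q n) A x) \<longlonglongrightarrow> B x)"
  proof (intro allI impI)
    fix Q x assume Q: "uniform_limit I (\<lambda>n. poly (Q n)) (fc_fun r) sequentially"
    have "(\<lambda>n. (poly_op (Q n) A x - poly_op (P0 n) A x) + poly_op (P0 n) A x) \<longlonglongrightarrow> 0 + B x"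
      using poly_op_diff_tendsto_0[OF A Q[unfolded I_def] P0[unfolded I_def]] B by (rule tendsto_add)
    then show "(\<lambda>n. poly_op (Q n) A x) \<longlonglongrightarrow> B x" by simp
  qed
  have "opow A r = B"
    unfolding opow_def I_def [symmetric]
  proof (rule the_equality)
    fix B' assume "\<forall>Q. uniform_limit I (\<lambda>n. poly (Q n)) (fc_fun r) sequentially
      \<longrightarrow> (\<forall>x. (\<lambda>n. poly_op (Q n) A x) \<longlonglongrightarrow> B' x)"
    then have "(\<lambda>n. poly_op (P0 n) A x) \<longlonglongrightarrow> B' x" for x using P0 by blast
    then show "B' = B" using B by (intro ext) (rule LIMSEQ_unique)
  qed (rule B_limit)
  then show ?thesis using B_limit P unfolding I_def by blast
qed

lemma opow_tendsto_superset:
  fixes A :: "'a::chilbert_space \<Rightarrow> 'a"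
  assumes "positive_op A" "0 \<le> r" "onorm A \<le> L"
    and P: "uniform_limit {0..L} (\<lambda>n. poly (P n)) (fc_fun r) sequentially"
  shows "(\<lambda>n. poly_op (P n) A x) \<longlonglongrightarrow> opow A r x"
  using assms by (intro opow_tendsto uniform_limit_on_subset[OF P]) auto

lemma norm_opow_diff_le:
  fixes A :: "'a::chilbert_space \<Rightarrow> 'a"
  assumes A: "positive_op A" and r: "0 \<le> r"
    and bound: "\<And>s. s \<in> {0..onorm A} \<Longrightarrow> \<bar>fc_fun r s - c\<bar> \<le> d"
  shows "norm (opow A r x - c *\<^sub>R x) \<le> d * norm x"
proof -
  obtain P where P: "uniform_limit {0..onorm A} (\<lambda>n. poly (P n)) (fc_fun r) sequentially"
    using fc_fun_poly_approx[OF r] by blast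
  have lim: "(\<lambda>n. norm (poly_op (P n) A x - c *\<^sub>R x)) \<longlonglongrightarrow> norm (opow A r x - c *\<^sub>R x)"
    by (intro tendsto_norm tendsto_diff opow_tendsto[OF A r P] tendsto_const)
  have le: "norm (opow A r x - c *\<^sub>R x) \<le> (d + e) * norm x" if "0 < e" for e
  proof (rule LIMSEQ_le_const2[OF lim])
    obtain N where N: "\<And>n s. N \<le> n \<Longrightarrow> s \<in> {0..onorm A} \<Longrightarrow> dist (poly (P n) s) (fc_fun r s) < e"
      using uniform_limitD[OF P \<open>0 < e\<close>] unfolding eventually_sequentially by blast
    have "norm (poly_op (P n - [:c:]) A x) \<le> (d + e) * norm x" if "N \<le> n" for n
      using N[OF that] bound by (intro norm_poly_op_le[OF A]) (force simp: dist_real_def)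
    then show "\<exists>N. \<forall>n\<ge>N. norm (poly_op (P n) A x - c *\<^sub>R x) \<le> (d + e) * norm x"
      by (auto simp: poly_op_diff)
  qed
  have "(\<lambda>n. (d + inverse (real (Suc n))) * norm x) \<longlonglongrightarrow> d * norm x"
    using tendsto_mult_right[OF LIMSEQ_inverse_real_of_nat_add[of d]] .
  then show ?thesis by (rule LIMSEQ_le_const) (auto intro!: le)
qed

lemma norm_opow_le:
  fixes A :: "'a::chilbert_space \<Rightarrow> 'a"
  assumes "positive_op A" "0 \<le> r"
  shows "norm (opow A r x) \<le> fc_fun r (onorm A) * norm x"
  using norm_opow_diff_le[OF assms, of 0 "fc_fun r (onorm A)"]
  by (simp add: fc_fun_nonneg fc_fun_mono assms(2))

lemma bounded_clinear_opow:
  fixes A :: "'a::chilbert_space \<Rightarrow> 'a"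
  assumes A: "positive_op A" and r: "0 \<le> r"
  shows "bounded_clinear (opow A r)"
proof (rule bounded_clinearI)
  obtain P where P: "uniform_limit {0..onorm A} (\<lambda>n. poly (P n)) (fc_fun r) sequentially"
    using fc_fun_poly_approx[OF r] by blast
  note lim = opow_tendsto[OF A r P] and PA = bounded_clinear_poly_op[OF positive_op_bounded_clinear[OF A]]
  fix x y a
  have "(\<lambda>n. poly_op (P n) A (x + y)) \<longlonglongrightarrow> opow A r x + opow A r y"
    using tendsto_add[OF lim lim] by (simp add: clinear_add[OF PA])
  then show "opow A r (x + y) = opow A r x + opow A r y"
    using lim LIMSEQ_unique by blast
  have "(\<lambda>n. poly_op (P n) A (scaleC a x)) \<longlonglongrightarrow> scaleC a (opow A r x)"
    using bounded_linear.tendsto[OF bounded_linear_scaleC lim] by (simp add: clinear_scaleC[OF PA])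
  then show "opow A r (scaleC a x) = scaleC a (opow A r x)"
    using lim LIMSEQ_unique by blast
  show "norm (opow A r x) \<le> norm x * fc_fun r (onorm A)"
    using norm_opow_le[OF A r] by (simp add: mult.commute)
qed

lemma cinner_opow_commute:
  fixes A :: "'a::chilbert_space \<Rightarrow> 'a"
  assumes A: "positive_op A" and r: "0 \<le> r"
  shows "cinner (opow A r x) y = cinner x (opow A r y)"
proof -
  obtain P where P: "uniform_limit {0..onorm A} (\<lambda>n. poly (P n)) (fc_fun r) sequentially"
    using fc_fun_poly_approx[OF r] by blast
  have "(\<lambda>n. cinner (poly_op (P n) A x) y) \<longlonglongrightarrow> cinner (opow A r x) y"
    "(\<lambda>n. cinner x (poly_op (P n) A y)) \<longlonglongrightarrow> cinner x (opow A r y)"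
    by (intro tendsto_cinner opow_tendsto[OF A r P] tendsto_const)+
  moreover have "cinner (poly_op (P n) A x) y = cinner x (poly_op (P n) A y)" for n
    using A by (simp add: positive_op_def cinner_poly_op_selfadjoint)
  ultimately show ?thesis using LIMSEQ_unique by fastforce
qed

lemma opow_0:
  fixes A :: "'a::chilbert_space \<Rightarrow> 'a"
  assumes "positive_op A"
  shows "opow A 0 x = x"
proof -
  have "uniform_limit {0..onorm A} (\<lambda>n. poly 1) (fc_fun 0) sequentially"
    by (rule uniform_limitI) (simp add: fc_fun_def)
  from opow_tendsto[OF assms order_refl this, of x] show ?thesis by (simp add: LIMSEQ_const_iff)
qed

lemma opow_1:
  fixes A :: "'a::chilbert_space \<Rightarrow> 'a"
  assumes "positive_op A"
  shows "opow A 1 x = A x"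
proof -
  have "uniform_limit {0..onorm A} (\<lambda>n. poly [:0, 1:]) (fc_fun 1) sequentially"
    by (rule uniform_limitI) (simp add: fc_fun_def)
  from opow_tendsto[OF assms zero_le_one this, of x] show ?thesis
    by (simp add: LIMSEQ_const_iff poly_op_X)
qed

lemma poly_op_tendsto_opow_diagonal:
  fixes A :: "'a::chilbert_space \<Rightarrow> 'a"
  assumes A: "positive_op A" and r: "0 \<le> r"
    and P: "uniform_limit {0..onorm A} (\<lambda>n. poly (P n)) (fc_fun r) sequentially"
    and y: "ys \<longlonglongrightarrow> y"
  shows "(\<lambda>n. poly_op (P n) A (ys n)) \<longlonglongrightarrow> opow A r y"
proof -
  define C where "C = fc_fun r (onorm A) + 1"
  obtain N where N: "\<And>n s. N \<le> n \<Longrightarrow> s \<in> {0..onorm A} \<Longrightarrow> dist (poly (P n) s) (fc_fun r s) < 1"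
    using uniform_limitD[OF P zero_less_one] unfolding eventually_sequentially by blast
  have bounded: "norm (poly_op (P n) A z) \<le> C * norm z" if "N \<le> n" for n z
  proof (rule norm_poly_op_le[OF A])
    fix s assume s: "s \<in> {0..onorm A}"
    then have "fc_fun r s \<le> fc_fun r (onorm A)" using fc_fun_mono[OF r] by simp
    then show "\<bar>poly (P n) s\<bar> \<le> C"
      using N[OF that s] fc_fun_nonneg[of r s] by (auto simp: C_def dist_real_def)
  qed
  have "(\<lambda>n. C * norm (ys n - y)) \<longlonglongrightarrow> 0"
    using tendsto_mult_right_zero[OF tendsto_norm_zero[OF LIM_zero[OF y]]] .
  then have "(\<lambda>n. poly_op (P n) A (ys n - y)) \<longlonglongrightarrow> 0"
    by (rule Lim_null_comparison[rotated]) (auto simp: eventually_sequentially intro!: exI[of _ N] bounded)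
  then have "(\<lambda>n. poly_op (P n) A (ys n - y) + poly_op (P n) A y) \<longlonglongrightarrow> 0 + opow A r y"
    by (intro tendsto_add opow_tendsto[OF A r P])
  then show ?thesis
    by (simp add: clinear_diff[OF bounded_clinear_poly_op[OF positive_op_bounded_clinear[OF A]]])
qed

lemma opow_opow:
  fixes A :: "'a::chilbert_space \<Rightarrow> 'a"
  assumes A: "positive_op A" and r: "0 \<le> r" and q: "0 \<le> q"
  shows "opow A r (opow A q x) = opow A (r + q) x"
proof -
  define I where "I = {0..onorm A}"
  obtain P where P: "uniform_limit I (\<lambda>n. poly (P n)) (fc_fun r) sequentially"
    using fc_fun_poly_approx[OF r] unfolding I_def by blast
  obtain Q where Q: "uniform_limit I (\<lambda>n. poly (Q n)) (fc_fun q) sequentially"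
    using fc_fun_poly_approx[OF q] unfolding I_def by blast
  have "uniform_limit I (\<lambda>n s. poly (P n) s * poly (Q n) s) (\<lambda>s. fc_fun r s * fc_fun q s) sequentially"
    using P Q unfolding I_def
    by (intro uniform_lim_mult compact_imp_bounded compact_continuous_image continuous_on_fc_fun r q)
       auto
  then have PQ: "uniform_limit I (\<lambda>n. poly (P n * Q n)) (fc_fun (r + q)) sequentially"
    by (simp add: fc_fun_mult[OF r q] poly_mult[abs_def])
  have "(\<lambda>n. poly_op (P n) A (poly_op (Q n) A x)) \<longlonglongrightarrow> opow A r (opow A q x)"
    using P Q unfolding I_def
    by (intro poly_op_tendsto_opow_diagonal[OF A r] opow_tendsto[OF A q])
  then have "(\<lambda>n. poly_op (P n * Q n) A x) \<longlonglongrightarrow> opow A r (opow A q x)"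
    by (simp add: poly_op_mult[OF positive_op_bounded_clinear[OF A]])
  moreover have "(\<lambda>n. poly_op (P n * Q n) A x) \<longlonglongrightarrow> opow A (r + q) x"
    using PQ r q unfolding I_def by (intro opow_tendsto[OF A]) simp_all
  ultimately show ?thesis by (rule LIMSEQ_unique)
qed

lemma Re_cinner_opow:
  fixes A :: "'a::chilbert_space \<Rightarrow> 'a"
  assumes A: "positive_op A" and r: "0 \<le> r"
  shows "Re (cinner (opow A r x) x) = (norm (opow A (r/2) x))\<^sup>2"
proof -
  have "opow A r x = opow A (r/2) (opow A (r/2) x)" using r by (simp add: opow_opow[OF A])
  then have "cinner (opow A r x) x = cinner (opow A (r/2) x) (opow A (r/2) x)"
    using cinner_opow_commute[OF A, of "r/2"] r by simp
  then show ?thesis by (simp add: Re_cinner_self)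
qed

lemma positive_opow:
  fixes A :: "'a::chilbert_space \<Rightarrow> 'a"
  assumes A: "positive_op A" and r: "0 \<le> r"
  shows "positive_op (opow A r)"
  using bounded_clinear_opow[OF A r] cinner_opow_commute[OF A r] Re_cinner_opow[OF A r]
  by (simp add: positive_op_def selfadjoint_def)

lemma apply_eq_0_if_opow_eq_0:
  fixes A :: "'a::chilbert_space \<Rightarrow> 'a"
  assumes A: "positive_op A" and "0 \<le> r" "r \<le> 1" and "opow A r x = 0"
  shows "A x = 0"
proof -
  have "A x = opow A (1 - r) (opow A r x)" using assms(2,3) by (simp add: opow_opow[OF A] opow_1[OF A])
  then show ?thesis
    using assms clinear_zero[OF bounded_clinear_opow[OF A, of "1 - r"]] by simp
qed

lemma poly_op_intertwine:
  assumes U: "bounded_clinear U" and A': "\<And>x. A' x = U (A (V x))" and VU: "\<And>z. V (U (A z)) = A z"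
  shows "poly_op p A' x = poly p 0 *\<^sub>R x + U (poly_op p A (V x)) - poly p 0 *\<^sub>R U (V x)"
proof (induct p arbitrary: x rule: pCons_induct)
  case (pCons a p)
  have "poly_op (pCons a p) A' x = a *\<^sub>R x + U (poly_op p A (A (V x)))"
    by (simp add: poly_op_pCons pCons A' VU)
  moreover have "U (poly_op (pCons a p) A (V x)) = a *\<^sub>R U (V x) + U (poly_op p A (A (V x)))"
    by (simp add: poly_op_pCons clinear_add[OF U] clinear_scaleR[OF U])
  ultimately show ?case by simp
qed (simp add: clinear_zero[OF U])

text \<open>The constant term of the approximating polynomials tends to \<open>0\<^sup>r = 0\<close>, which makes
  the defect terms of the previous lemma vanish in the limit.\<close>
lemma opow_intertwine:
  fixes A A' U V :: "'a::chilbert_space \<Rightarrow> 'a"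
  assumes A: "positive_op A" and A'_pos: "positive_op A'" and U: "bounded_clinear U"
    and A': "\<And>x. A' x = U (A (V x))" and VU: "\<And>z. V (U (A z)) = A z" and r: "0 < r"
  shows "opow A' r x = U (opow A r (V x))"
proof -
  define L where "L = max (onorm A) (onorm A')"
  obtain P where P: "uniform_limit {0..L} (\<lambda>n. poly (P n)) (fc_fun r) sequentially"
    using fc_fun_poly_approx r by fastforce
  have "0 \<le> L" unfolding L_def using positive_op_onorm_nonneg[OF A] by simp
  then have "(\<lambda>n. poly (P n) 0) \<longlonglongrightarrow> fc_fun r 0" by (intro tendsto_uniform_limitI[OF P]) auto
  then have P0: "(\<lambda>n. poly (P n) 0) \<longlonglongrightarrow> 0" using r by (simp add: fc_fun_def)
  have "(\<lambda>n. poly (P n) 0 *\<^sub>R x + U (poly_op (P n) A (V x)) - poly (P n) 0 *\<^sub>R U (V x)) \<longlonglongrightarrow>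
      0 *\<^sub>R x + U (opow A r (V x)) - 0 *\<^sub>R U (V x)"
    using r by (intro tendsto_intros P0 bounded_clinear_tendsto[OF U] opow_tendsto_superset[OF A _ _ P])
       (simp_all add: L_def)
  then have "(\<lambda>n. poly_op (P n) A' x) \<longlonglongrightarrow> U (opow A r (V x))"
    by (simp add: poly_op_intertwine[where A' = A' and A = A and V = V, OF U A' VU])
  moreover have "(\<lambda>n. poly_op (P n) A' x) \<longlonglongrightarrow> opow A' r x"
    using r by (intro opow_tendsto_superset[OF A'_pos _ _ P]) (simp_all add: L_def)
  ultimately show ?thesis by (rule LIMSEQ_unique [symmetric])
qed

lemma positive_adj_comp:
  fixes S :: "'a::chilbert_space \<Rightarrow> 'a"
  assumes S: "bounded_clinear S"
  shows "positive_op (adj S \<circ> S)"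
  unfolding positive_op_def selfadjoint_def
proof (intro conjI allI)
  show "bounded_clinear (adj S \<circ> S)" by (rule bounded_clinear_comp[OF bounded_clinear_adj[OF S] S])
  fix x y
  show "cinner ((adj S \<circ> S) x) y = cinner x ((adj S \<circ> S) y)"
    by (metis cinner_adj_right[OF S] cinner_commute comp_apply)
  show "0 \<le> Re (cinner ((adj S \<circ> S) x) x)"
    by (metis Re_cinner_self cinner_adj_right[OF S] cinner_commute comp_apply complex_cnj_cnj
        zero_le_power2 cnj.sel(1))
qed

section \<open>Polar decomposition\<close>

lemma positive_absop:
  fixes T :: "'a::chilbert_space \<Rightarrow> 'a"
  shows "bounded_clinear T \<Longrightarrow> positive_op (absop T)"
  unfolding absop_def by (intro positive_opow positive_adj_comp) simp_all

lemma absop_absop: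
  fixes T :: "'a::chilbert_space \<Rightarrow> 'a"
  assumes "bounded_clinear T"
  shows "absop T (absop T z) = adj T (T z)"
  using opow_opow[OF positive_adj_comp[OF assms], of "1/2" "1/2" z]
    opow_1[OF positive_adj_comp[OF assms]]
  by (simp add: absop_def)

lemma norm_absop:
  fixes T :: "'a::chilbert_space \<Rightarrow> 'a"
  assumes T: "bounded_clinear T"
  shows "norm (absop T z) = norm (T z)"
proof -
  have "cinner (absop T z) (absop T z) = cinner (T z) (T z)"
    by (simp add: cinner_opow_commute positive_adj_comp[OF T] absop_def absop_absop[OF T, unfolded absop_def]
        cinner_adj_right[OF T])
  then have "(norm (absop T z))\<^sup>2 = (norm (T z))\<^sup>2" by (metis Re_cinner_self)
  then show ?thesis by (simp add: power2_eq_iff_nonneg)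
qed

lemma onorm_absop_le:
  fixes T :: "'a::chilbert_space \<Rightarrow> 'a"
  shows "bounded_clinear T \<Longrightarrow> onorm (absop T) \<le> onorm T"
  by (rule onorm_bound) (simp_all add: norm_absop bounded_clinear_onorm_nonneg bounded_clinear_norm_le)

lemma ker_orthogonal_adj:
  fixes U :: "'a::chilbert_space \<Rightarrow> 'b::chilbert_space"
  assumes "bounded_clinear U" "U z = 0"
  shows "cinner z (adj U v) = 0"
  using assms by (simp flip: cinner_adj_right)

lemma partial_isometry_bounded_clinear: "partial_isometry U \<Longrightarrow> bounded_clinear U"
  by (simp add: partial_isometry_def)

lemma norm_partial_isometry:
  "partial_isometry U \<Longrightarrow> (\<And>z. U z = 0 \<Longrightarrow> cinner z v = 0) \<Longrightarrow> norm (U v) = norm v"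
  by (simp add: partial_isometry_def)

lemma norm_adj_partial_isometry_le:
  fixes U :: "'a::chilbert_space \<Rightarrow> 'a"
  assumes U: "partial_isometry U"
  shows "norm (adj U v) \<le> norm v"
proof -
  note U' = partial_isometry_bounded_clinear[OF U]
  have "(norm (adj U v))\<^sup>2 = Re (cinner v (U (adj U v)))"
    by (metis Re_cinner_self cinner_adj_right[OF U'] cinner_commute complex_cnj_cnj cnj.sel(1))
  also have "\<dots> \<le> norm v * norm (U (adj U v))" by (rule Re_cinner_le)
  also have "norm (U (adj U v)) = norm (adj U v)"
    by (rule norm_partial_isometry[OF U ker_orthogonal_adj[OF U']])
  finally show ?thesis by (cases "adj U v = 0") (simp_all add: power2_eq_square)
qed

lemma adj_partial_isometry_cancel:
  fixes U :: "'a::chilbert_space \<Rightarrow> 'a"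
  assumes U: "partial_isometry U" and v: "\<And>z. U z = 0 \<Longrightarrow> cinner z v = 0"
  shows "adj U (U v) = v"
proof -
  note U' = partial_isometry_bounded_clinear[OF U]
  define w where "w = adj U (U v)"
  have "cinner w v = cinner (U v) (U v)"
    by (metis cinner_adj_right[OF U'] cinner_commute w_def)
  then have "Re (cinner w v) = (norm v)\<^sup>2"
    by (simp add: Re_cinner_self norm_partial_isometry[OF U v])
  moreover have "norm w \<le> norm v"
    using norm_adj_partial_isometry_le[OF U, of "U v"] by (simp add: w_def norm_partial_isometry[OF U v])
  ultimately have "(norm (w - v))\<^sup>2 \<le> 0"
    by (simp add: power2_norm_diff power_mono)
  then show ?thesis by (simp add: w_def)
qed

locale polar_decomp =
  fixes T U :: "'a::chilbert_space \<Rightarrow> 'a"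
  assumes bounded: "bounded_clinear T" and polar: "polar_decomposition T U"
begin

lemma partial_isometry_U: "partial_isometry U"
  using polar unfolding polar_decomposition_def by blast

lemma bounded_U: "bounded_clinear U"
  by (rule partial_isometry_bounded_clinear[OF partial_isometry_U])

lemma T_eq_U_absop: "T z = U (absop T z)"
  using polar unfolding polar_decomposition_def by blast

lemma ker_U_iff: "U z = 0 \<longleftrightarrow> T z = 0"
  using polar unfolding polar_decomposition_def by blast

lemma absop_orthogonal_ker:
  assumes "U z = 0"
  shows "cinner z (absop T w) = 0"
proof -
  have "absop T z = 0" using assms norm_absop[OF bounded, of z] by (simp add: ker_U_iff)
  moreover have "cinner z (absop T w) = cinner (absop T z) w"
    using positive_absop[OF bounded] by (simp add: positive_op_def selfadjoint_def)
  ultimately show ?thesis by simp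
qed

lemma adj_U_U_absop: "adj U (U (absop T w)) = absop T w"
  using adj_partial_isometry_cancel[OF partial_isometry_U absop_orthogonal_ker] .

lemma adj_T_eq: "adj T v = absop T (adj U v)"
proof -
  have "adj T = (\<lambda>v. absop T (adj U v))"
    using positive_absop[OF bounded]
    by (intro adj_eqI) (simp add: T_eq_U_absop cinner_adj_right[OF bounded_U] positive_op_def selfadjoint_def)
  then show ?thesis by simp
qed

lemma absop_adj_eq: "absop (adj T) v = U (absop T (adj U v))"
  unfolding absop_def
proof (rule opow_intertwine[OF positive_adj_comp[OF bounded] positive_adj_comp[OF bounded_clinear_adj[OF bounded]]
      bounded_U])
  fix x
  have "(adj (adj T) \<circ> adj T) x = T (absop T (adj U x))" by (simp add: adj_adj[OF bounded] adj_T_eq)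
  also have "\<dots> = U (absop T (absop T (adj U x)))" by (rule T_eq_U_absop)
  finally show "(adj (adj T) \<circ> adj T) x = U ((adj T \<circ> T) (adj U x))"
    by (simp add: absop_absop[OF bounded])
next
  fix z
  show "adj U (U ((adj T \<circ> T) z)) = (adj T \<circ> T) z"
    using adj_U_U_absop[of "absop T z"] by (simp add: absop_absop[OF bounded])
qed simp

lemma opow_absop_adj_eq: "0 < s \<Longrightarrow> opow (absop (adj T)) s v = U (opow (absop T) s (adj U v))"
  by (rule opow_intertwine[OF positive_absop[OF bounded] positive_absop[OF bounded_clinear_adj[OF bounded]]
        bounded_U absop_adj_eq adj_U_U_absop])

lemma norm_opow_absop_adj_U_le:
  assumes "0 \<le> s"
  shows "norm (opow (absop T) s (adj U y)) \<le> norm (opow (absop (adj T)) s y)"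
proof (cases "s = 0")
  case True
  then show ?thesis
    using norm_adj_partial_isometry_le[OF partial_isometry_U]
    by (simp add: opow_0 positive_absop bounded bounded_clinear_adj)
next
  case False
  note P = positive_absop[OF bounded] and Q = positive_absop[OF bounded_clinear_adj[OF bounded]]
  have "(norm (opow (absop (adj T)) s y))\<^sup>2 = Re (cinner (opow (absop (adj T)) (2 * s) y) y)"
    using Re_cinner_opow[OF Q, of "2 * s"] assms by simp
  also have "\<dots> = Re (cinner (opow (absop T) (2 * s) (adj U y)) (adj U y))"
    using False assms by (simp add: opow_absop_adj_eq cinner_adj_right[OF bounded_U])
  also have "\<dots> = (norm (opow (absop T) s (adj U y)))\<^sup>2"
    using Re_cinner_opow[OF P, of "2 * s"] assms by simp
  finally show ?thesis by simp
qed

lemma opow_absop_neq_0: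
  assumes "T x \<noteq> 0" "0 \<le> r" "r \<le> 1"
  shows "opow (absop T) r x \<noteq> 0"
  using apply_eq_0_if_opow_eq_0[OF positive_absop[OF bounded] assms(2,3)] assms(1)
  by (metis T_eq_U_absop clinear_zero[OF bounded_U])

lemma cinner_T_split:
  assumes "0 \<le> t" "t \<le> 1"
  shows "cinner (T x) y =
    cinner (opow (absop T) (1/2) (opow (absop T) (t/2) x)) (opow (absop T) ((1 - t)/2) (adj U y))"
proof -
  note P = positive_absop[OF bounded]
  have "absop T x = opow (absop T) ((1 - t)/2) (opow (absop T) (1/2) (opow (absop T) (t/2) x))"
    using assms by (simp add: opow_opow[OF P] opow_1[OF P] field_simps)
  then show ?thesis
    using assms by (simp add: T_eq_U_absop cinner_adj_right[OF bounded_U] cinner_opow_commute[OF P])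
qed

end

text \<open>The spectrum of \<open>P\<^bsup>1/2\<^esup>\<close> lies in \<open>[0, M]\<close>, so \<open>\<parallel>P\<^bsup>1/2\<^esup> - M/2\<parallel> \<le> M/2\<close>.\<close>
lemma cmod_cinner_opow_half_le:
  fixes P :: "'a::chilbert_space \<Rightarrow> 'a"
  assumes P: "positive_op P" and M: "0 \<le> M" "onorm P \<le> M\<^sup>2"
  shows "cmod (cinner (opow P (1/2) a) b) \<le> M/2 * (norm a * norm b + cmod (cinner a b))"
proof -
  have "norm (opow P (1/2) a - (M/2) *\<^sub>R a) \<le> M/2 * norm a"
  proof (rule norm_opow_diff_le[OF P])
    fix s assume s: "s \<in> {0..onorm P}"
    then have "fc_fun (1/2) s = sqrt s" by (simp add: fc_fun_def powr_half_sqrt)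
    moreover have "0 \<le> sqrt s" "sqrt s \<le> M" using s M real_le_lsqrt by auto
    ultimately show "\<bar>fc_fun (1/2) s - M/2\<bar> \<le> M/2" unfolding abs_le_iff by linarith
  qed simp
  then have "cmod (cinner (opow P (1/2) a - (M/2) *\<^sub>R a) b) \<le> M/2 * norm a * norm b"
    by (meson complex_Cauchy_Schwarz mult_right_mono norm_ge_zero order_trans)
  moreover have "cinner (opow P (1/2) a) b = cinner (opow P (1/2) a - (M/2) *\<^sub>R a) b + of_real (M/2) * cinner a b"
    by (simp add: cinner_diff_left cinner_scaleR_left)
  ultimately show ?thesis
    using M norm_triangle_ineq[of "cinner (opow P (1/2) a - (M/2) *\<^sub>R a) b" "of_real (M/2) * cinner a b"]
    by (simp add: norm_mult algebra_simps)
qed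

lemma Inf_norm_diff_scaleC_le:
  "Inf ((\<lambda>l. (norm (a - scaleC l b))\<^sup>2) ` UNIV) \<le>
    (norm a)\<^sup>2 - (cmod (cinner a b))\<^sup>2 / (norm (b::'a::complex_inner))\<^sup>2"
proof -
  have "Inf ((\<lambda>l. (norm (a - scaleC l b))\<^sup>2) ` UNIV) \<le>
      (norm (a - scaleC (cinner a b / of_real ((norm b)\<^sup>2)) b))\<^sup>2"
    by (intro cInf_lower bdd_belowI[of _ 0]) auto
  then show ?thesis by (simp only: power2_norm_diff_projection)
qed

text \<open>With \<open>d\<close> the squared distance of \<open>a\<close> from the line through \<open>b\<close>, we have
  \<open>|\<langle>a, b\<rangle>|\<^sup>2 \<le> (\<parallel>a\<parallel>\<^sup>2 - d) \<parallel>b\<parallel>\<^sup>2\<close>; the bound then follows from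
  \<open>\<parallel>a\<parallel>\<parallel>b\<parallel> + c \<le> 3/2 \<parallel>a\<parallel>\<parallel>b\<parallel> + c\<^sup>2/(2\<parallel>a\<parallel>\<parallel>b\<parallel>)\<close>, an instance of AM-GM.\<close>
lemma norm_mult_add_cmod_cinner_le:
  fixes a b :: "'a::complex_inner"
  assumes "a \<noteq> 0" and Y: "norm b \<le> Y"
  shows "norm a * norm b + cmod (cinner a b) \<le>
    2 * norm a * Y - Inf ((\<lambda>l. (norm (a - scaleC l b))\<^sup>2) ` UNIV) / (2 * norm a) * Y"
proof -
  define \<alpha> \<beta> c where "\<alpha> = norm a" and "\<beta> = norm b" and "c = cmod (cinner a b)"
  have "0 < \<alpha>" "0 \<le> \<beta>" "\<beta> \<le> Y" "0 \<le> Y" "0 \<le> c" "c \<le> \<alpha> * \<beta>"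
    using assms complex_Cauchy_Schwarz[of a b] order_trans[OF norm_ge_zero Y]
    by (simp_all add: \<alpha>_def \<beta>_def c_def)
  define G where "G = 3 * \<alpha> / 2 + c\<^sup>2 / (2 * \<alpha> * \<beta>\<^sup>2)"
  have "0 \<le> G" using \<open>0 < \<alpha>\<close> by (simp add: G_def)
  have "\<alpha> * \<beta> + c \<le> G * \<beta>"
  proof (cases "\<beta> = 0")
    case False
    then have "G * \<beta> - (\<alpha> * \<beta> + c) = (\<alpha> * \<beta> - c)\<^sup>2 / (2 * \<alpha> * \<beta>)"
      using \<open>0 < \<alpha>\<close> by (simp add: G_def field_simps power2_eq_square)
    moreover have "0 \<le> (\<alpha> * \<beta> - c)\<^sup>2 / (2 * \<alpha> * \<beta>)" using \<open>0 < \<alpha>\<close> \<open>0 \<le> \<beta>\<close> by simp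
    ultimately show ?thesis by linarith
  qed (use \<open>c \<le> \<alpha> * \<beta>\<close> \<open>0 \<le> c\<close> in simp)
  also have "\<dots> \<le> G * Y" using \<open>\<beta> \<le> Y\<close> \<open>0 \<le> G\<close> by (rule mult_left_mono)
  also have "\<dots> = 2 * \<alpha> * Y - (\<alpha>\<^sup>2 - c\<^sup>2 / \<beta>\<^sup>2) / (2 * \<alpha>) * Y"
    using \<open>0 < \<alpha>\<close> by (simp add: G_def field_simps power2_eq_square)
  also have "\<dots> \<le> 2 * \<alpha> * Y - Inf ((\<lambda>l. (norm (a - scaleC l b))\<^sup>2) ` UNIV) / (2 * \<alpha>) * Y"
    using Inf_norm_diff_scaleC_le[of a b] \<open>0 < \<alpha>\<close> \<open>0 \<le> Y\<close>
    by (intro diff_left_mono mult_right_mono divide_right_mono) (simp_all add: \<alpha>_def \<beta>_def c_def)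
  finally show ?thesis by (simp add: \<alpha>_def \<beta>_def c_def)
qed

theorem proposition2p8:
  fixes T U :: "'a::chilbert_space \<Rightarrow> 'a" and t :: real and x y :: 'a
  assumes "bounded_clinear T"
    and "polar_decomposition T U"
    and "t \<in> {0..1}"
    and "T x \<noteq> 0"
  shows "cmod (cinner (T x) y) \<le>
    sqrt (onorm T) / 2 *
      (2 * sqrt (Re (cinner (opow (absop T) t x) x) * Re (cinner (opow (absop (adj T)) (1 - t) y) y))
       - (Inf ((\<lambda>l::complex. (norm (opow (absop T) (t/2) x - scaleC l (opow (absop T) ((1 - t)/2) (adj U y))))\<^sup>2) ` UNIV)
          / (2 * norm (opow (absop T) (t/2) x)))
         * norm (opow (absop (adj T)) ((1 - t)/2) y))"
proof -
  interpret polar_decomp T U using assms(1,2) by unfold_locales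
  have t: "0 \<le> t" "t \<le> 1" using assms(3) by auto
  note P = positive_absop[OF assms(1)] and Q = positive_absop[OF bounded_clinear_adj[OF assms(1)]]
  define a b where "a = opow (absop T) (t/2) x" and "b = opow (absop T) ((1 - t)/2) (adj U y)"
  define M Y where "M = sqrt (onorm T)" and "Y = norm (opow (absop (adj T)) ((1 - t)/2) y)"
  have "0 \<le> M" "onorm (absop T) \<le> M\<^sup>2"
    using onorm_absop_le[OF assms(1)] bounded_clinear_onorm_nonneg[OF assms(1)] by (simp_all add: M_def)
  then have "cmod (cinner (T x) y) \<le> M/2 * (norm a * norm b + cmod (cinner a b))"
    unfolding a_def b_def cinner_T_split[OF t] by (rule cmod_cinner_opow_half_le[OF P])
  also have "\<dots> \<le>
      M/2 * (2 * norm a * Y - Inf ((\<lambda>l. (norm (a - scaleC l b))\<^sup>2) ` UNIV) / (2 * norm a) * Y)"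
    using opow_absop_neq_0[OF assms(4)] norm_opow_absop_adj_U_le t \<open>0 \<le> M\<close>
    by (intro mult_left_mono norm_mult_add_cmod_cinner_le) (simp_all add: a_def b_def Y_def)
  also have "2 * norm a * Y = 2 * sqrt ((norm a)\<^sup>2 * Y\<^sup>2)"
    by (simp add: real_sqrt_mult Y_def)
  finally show ?thesis
    using t by (simp add: Re_cinner_opow[OF P] Re_cinner_opow[OF Q] a_def b_def M_def Y_def mult.assoc)
qed

end
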